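(* Let $A\in\mathbb{R}^{n\times n}$, $B\in\mathbb{R}^{m\times m}$, $C:=\operatorname{diag}(A,B)$. Fix $k\in\{1,\dots,n+m\}$, let $r:=\binom{n+m}{k}$, $i_1:=\max\{0,k-n\}$, $i_2:=\min\{m,k\}$. For $i\in\{i_1,\dots,i_2\}$ let $\mu_i$ be the matrix measure induced by an $L_{p_i}$ vector norm $|\cdot|_{p_i}$ (the $p_i$ possibly different). Partition $x\in\mathbb{R}^r$ as $x=(x^{i_1},\dots,x^{i_2})$ with $x^i\in\mathbb{R}^{\binom{n}{k-i}\binom{m}{i}}$, let $|\cdot|_0$ be a monotonic norm on $\mathbb{R}^{i_2-i_1+1}$, and define the norm $|x|:=\big|\,(|x^{i_1}|_{p_{i_1}},\dots,|x^{i_2}|_{p_{i_2}})^T\big|_0$. Let $P\in\mathbb{R}^{r\times r}$ be a permutation matrix such that $C^{[k]}=P\,\operatorname{diag}_{i\in\{i_1,\dots,i_2\}}(A^{[k-i]}\oplus B^{[i]})\,P^{-1}$ (such $P$ exists), define the norm $|x|_P:=|P^{-1}x|$, and let $\mu_P$ be the matrix measure induced by $|\cdot|_P$. Then \[ \mu_P\big(C^{[k]}\big)=\max_{i\in\{i_1,\dots,i_2\}}\big\{\mu_i(A^{[k-i]})+\mu_i(B^{[i]})\big\}, \] and \[ \min_{i\in\{i_1,\dots,i_2\}}\big\{-\mu_i(-A^{[k-i]})-\mu_i(-B^{[i]})\big\}\le\mu_P\big(C^{[k]}\big). \]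
   Context: For $M\in\mathbb{R}^{p\times q}$, $M^{(k)}$ is the matrix of all $k\times k$ minors in lexicographic order; for square $M$, $M^{[k]}:=\frac{d}{dt}(\exp(Mt))^{(k)}|_{t=0}$, with $M^{(0)}:=1$, $M^{[0]}:=0$. Kronecker sum: $X\oplus Y:=X\otimes I_b+I_a\otimes Y$ for $X\in\mathbb{R}^{a\times a},Y\in\mathbb{R}^{b\times b}$. $\operatorname{diag}_{i\in\{i_1,\dots,i_2\}}(M_i)$ is block-diagonal with blocks $M_{i_1},\dots,M_{i_2}$ in order. A norm $|\cdot|_0$ on $\mathbb{R}^s$ is monotonic if $|u|_0\le|v|_0$ whenever $|u_j|\le|v_j|$ for all $j$. The matrix measure induced by a vector norm with induced matrix norm $\|\cdot\|$ is $\mu(M):=\lim_{\varepsilon\to0^+}(\|I+\varepsilon M\|-1)/\varepsilon$. *)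

theory Defs
  imports "Jordan_Normal_Form.Gauss_Jordan_Elimination" "Jordan_Normal_Form.Determinant"
    "HOL-Library.Extended_Real"
begin

text \<open>Strictly increasing index lists of length k with entries in [lo, hi), in lexicographic order.\<close>
fun ksubs_from :: "nat \<Rightarrow> nat \<Rightarrow> nat \<Rightarrow> nat list list" where
  "ksubs_from 0 lo hi = [[]]"
| "ksubs_from (Suc k) lo hi = concat (map (\<lambda>a. map ((#) a) (ksubs_from k (Suc a) hi)) [lo..<hi])"

definition ksubs :: "nat \<Rightarrow> nat \<Rightarrow> nat list list" where
  "ksubs k p = ksubs_from k 0 p"

text \<open>k-th multiplicative compound: matrix of all k x k minors, index sets in lexicographic order.\<close>
definition compound :: "nat \<Rightarrow> real mat \<Rightarrow> real mat" where
  "compound k M = mat (length (ksubs k (dim_row M))) (length (ksubs k (dim_col M)))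
     (\<lambda>(a, b). det (mat k k (\<lambda>(u, v). M $$ (ksubs k (dim_row M) ! a ! u, ksubs k (dim_col M) ! b ! v))))"

definition mexp :: "real mat \<Rightarrow> real mat" where
  "mexp M = mat (dim_row M) (dim_row M) (\<lambda>(i, j). \<Sum>l. (M ^\<^sub>m l) $$ (i, j) / fact l)"

text \<open>k-th additive compound: derivative at t = 0 of the k-th compound of exp(M t); M^[0] = 0.\<close>
definition add_compound :: "nat \<Rightarrow> real mat \<Rightarrow> real mat" where
  "add_compound k M = (if k = 0 then 0\<^sub>m 1 1 else
     mat (length (ksubs k (dim_row M))) (length (ksubs k (dim_row M)))
       (\<lambda>(a, b). (SOME D. ((\<lambda>t. compound k (mexp (t \<cdot>\<^sub>m M)) $$ (a, b)) has_real_derivative D) (at 0))))"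

definition kronecker :: "real mat \<Rightarrow> real mat \<Rightarrow> real mat" where
  "kronecker X Y = mat (dim_row X * dim_row Y) (dim_col X * dim_col Y)
     (\<lambda>(i, j). X $$ (i div dim_row Y, j div dim_col Y) * Y $$ (i mod dim_row Y, j mod dim_col Y))"

definition kron_sum :: "real mat \<Rightarrow> real mat \<Rightarrow> real mat" where
  "kron_sum X Y = kronecker X (1\<^sub>m (dim_row Y)) + kronecker (1\<^sub>m (dim_row X)) Y"

definition lp_norm :: "ereal \<Rightarrow> real vec \<Rightarrow> real" where
  "lp_norm p x = (if p = \<infinity> then Max (insert 0 {\<bar>x $ j\<bar> | j. j < dim_vec x})
     else (\<Sum>j<dim_vec x. \<bar>x $ j\<bar> powr real_of_ereal p) powr (1 / real_of_ereal p))"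

definition is_vec_norm :: "nat \<Rightarrow> (real vec \<Rightarrow> real) \<Rightarrow> bool" where
  "is_vec_norm s N \<longleftrightarrow>
     (\<forall>x\<in>carrier_vec s. 0 \<le> N x \<and> (N x = 0 \<longleftrightarrow> x = 0\<^sub>v s)) \<and>
     (\<forall>x\<in>carrier_vec s. \<forall>c. N (c \<cdot>\<^sub>v x) = \<bar>c\<bar> * N x) \<and>
     (\<forall>x\<in>carrier_vec s. \<forall>y\<in>carrier_vec s. N (x + y) \<le> N x + N y)"

definition monotonic_norm :: "nat \<Rightarrow> (real vec \<Rightarrow> real) \<Rightarrow> bool" where
  "monotonic_norm s N \<longleftrightarrow> is_vec_norm s N \<and>
     (\<forall>u\<in>carrier_vec s. \<forall>v\<in>carrier_vec s. (\<forall>j<s. \<bar>u $ j\<bar> \<le> \<bar>v $ j\<bar>) \<longrightarrow> N u \<le> N v)"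

definition induced_norm :: "(real vec \<Rightarrow> real) \<Rightarrow> nat \<Rightarrow> real mat \<Rightarrow> real" where
  "induced_norm N s M = Sup {N (M *\<^sub>v x) / N x | x. x \<in> carrier_vec s \<and> x \<noteq> 0\<^sub>v s}"

definition matrix_measure :: "(real vec \<Rightarrow> real) \<Rightarrow> nat \<Rightarrow> real mat \<Rightarrow> real" where
  "matrix_measure N s M = Lim (at_right 0) (\<lambda>\<epsilon>. (induced_norm N s (1\<^sub>m s + \<epsilon> \<cdot>\<^sub>m M) - 1) / \<epsilon>)"

definition permutation_mat :: "nat \<Rightarrow> real mat \<Rightarrow> bool" where
  "permutation_mat r P \<longleftrightarrow> (\<exists>\<sigma>. \<sigma> permutes {..<r} \<and>
     P = mat r r (\<lambda>(i, j). if i = \<sigma> j then 1 else 0))"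

definition mat_inv :: "real mat \<Rightarrow> real mat" where
  "mat_inv P = the (mat_inverse P)"

definition vec_block :: "(nat \<Rightarrow> nat) \<Rightarrow> nat \<Rightarrow> nat \<Rightarrow> real vec \<Rightarrow> real vec" where
  "vec_block d i1 i x = vec (d i) (\<lambda>t. x $ ((\<Sum>j\<in>{i1..<i}. d j) + t))"

end

theory Submission
  imports Defs "HOL-Analysis.Convex"
begin

(* The matrix measure of M for a norm on R^s is the limit, as e -> 0+, of (|I + eM| - 1) / e,
   a quotient that is nondecreasing in e; hence mu is subadditive and -mu(-M) <= mu(M).

   Conjugation by P turns C^[k] into the block-diagonal matrix D with blocks A^[k-i] (+) B^[i],
   and the norm |P^-1 x| into the block norm |x|.  As the outer norm is monotonic, the induced
   norm of I + eD is the largest of the induced norms of its blocks, so mu_P(C^[k]) is the largest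
   of the block measures.

   For one L_p norm, mu_p(X (+) Y) = mu_p(X) + mu_p(Y).  Reading z in R^(a*b) as an a x b array,
   X (x) I acts on its columns and I (x) Y on its rows, and |z|_p is the L_p norm of the L_p norms
   of its columns (or rows); with subadditivity this gives <=.  For >=, use
   |u (x) v|_p = |u|_p |v|_p and
   (u + eXu) (x) (v + eYv) = (I + e (X (+) Y)) (u (x) v) + e^2 (Xu (x) Yv). *)

section \<open>Row-major indexing\<close>

lemma row_major_index_less:
  assumes "i < a" "t < b"
  shows "i * b + t < a * (b::nat)"
proof -
  have "Suc i * b \<le> a * b" using assms by (intro mult_le_mono1) auto
  then show ?thesis using assms by simp
qed

lemma row_major_div_mod:
  assumes "t < (b::nat)"
  shows "(i * b + t) div b = i" "(i * b + t) mod b = t"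
  using assms by auto

lemma bij_betw_row_major:
  "bij_betw (\<lambda>(i, t). i * b + t) ({..<a} \<times> {..<b}) {..<a * (b::nat)}"
  by (rule bij_betw_byWitness[where f' = "\<lambda>j. (j div b, j mod b)"])
    (auto simp: row_major_index_less less_mult_imp_div_less intro!: mod_less_divisor gr0I)

lemma bij_betw_col_major:
  "bij_betw (\<lambda>(t, i). i * b + t) ({..<b} \<times> {..<a}) {..<a * (b::nat)}"
  by (rule bij_betw_byWitness[where f' = "\<lambda>j. (j mod b, j div b)"])
    (auto simp: row_major_index_less less_mult_imp_div_less intro!: mod_less_divisor gr0I)

lemma sum_row_major: "(\<Sum>j<a * b. g j) = (\<Sum>i<a. \<Sum>t<b. g (i * b + t :: nat))"
  using sum.reindex_bij_betw[OF bij_betw_row_major[of b a], of g]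
  by (simp add: sum.cartesian_product case_prod_beta')

lemma eq_vec_row_major:
  assumes "dim_vec w1 = a * b" "dim_vec w2 = a * b"
    and "\<And>i t. i < a \<Longrightarrow> t < b \<Longrightarrow> w1 $ (i * b + t) = w2 $ (i * b + t)"
  shows "w1 = w2"
proof (rule eq_vecI)
  fix j assume j: "j < dim_vec w2"
  then have "0 < b" using assms(2) by (cases b) auto
  then have "j div b < a" "j mod b < b" using j assms(2) by (auto simp: less_mult_imp_div_less)
  then show "w1 $ j = w2 $ j" using assms(3) by (metis div_mult_mod_eq)
qed (use assms in simp)

section \<open>L_p norms\<close>

lemma ereal_ge_1_cases:
  assumes "1 \<le> (p::ereal)"
  obtains "p = \<infinity>" | q where "p = ereal q" "1 \<le> q"
  using assms by (cases p) auto

lemma lp_norm_infinity: "lp_norm \<infinity> x = Max (insert 0 ((\<lambda>j. \<bar>x $ j\<bar>) ` {..<dim_vec x}))"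
  unfolding lp_norm_def by (simp add: image_def setcompr_eq_image, metis lessThan_iff)

lemma lp_norm_ereal: "lp_norm (ereal q) x = (\<Sum>j<dim_vec x. \<bar>x $ j\<bar> powr q) powr (1 / q)"
  unfolding lp_norm_def by simp

lemma lp_norm_nonneg: "1 \<le> p \<Longrightarrow> 0 \<le> lp_norm p x"
  by (erule ereal_ge_1_cases) (auto simp: lp_norm_infinity lp_norm_ereal Max_ge_iff)

lemma abs_le_lp_norm:
  assumes "1 \<le> p" "j < dim_vec x"
  shows "\<bar>x $ j\<bar> \<le> lp_norm p x"
  using assms(1)
proof (cases rule: ereal_ge_1_cases)
  case 1
  then show ?thesis using assms by (simp add: lp_norm_infinity Max_ge_iff)
next
  case (2 q)
  have "\<bar>x $ j\<bar> = (\<bar>x $ j\<bar> powr q) powr (1/q)" using 2 by (simp add: powr_powr)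
  also have "\<dots> \<le> (\<Sum>j<dim_vec x. \<bar>x $ j\<bar> powr q) powr (1 / q)"
    using 2 assms by (intro powr_mono2 member_le_sum) auto
  finally show ?thesis using 2 by (simp add: lp_norm_ereal)
qed

lemma lp_norm_infinity_le:
  assumes "0 \<le> c" "\<And>j. j < dim_vec x \<Longrightarrow> \<bar>x $ j\<bar> \<le> c"
  shows "lp_norm \<infinity> x \<le> c"
  unfolding lp_norm_infinity using assms by (intro Max.boundedI) auto

lemma lp_norm_mono:
  assumes "1 \<le> p" "dim_vec x = dim_vec y" "\<And>j. j < dim_vec x \<Longrightarrow> \<bar>x $ j\<bar> \<le> \<bar>y $ j\<bar>"
  shows "lp_norm p x \<le> lp_norm p y"
  using assms(1)
proof (cases rule: ereal_ge_1_cases)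
  case 1
  show ?thesis unfolding 1
    by (rule lp_norm_infinity_le[OF lp_norm_nonneg])
      (use assms abs_le_lp_norm[of \<infinity> _ y] in \<open>auto intro: order_trans\<close>)
next
  case (2 q)
  have "(\<Sum>j<dim_vec x. \<bar>x $ j\<bar> powr q) \<le> (\<Sum>j<dim_vec y. \<bar>y $ j\<bar> powr q)"
    using assms 2 by (auto intro!: sum_mono powr_mono2)
  then show ?thesis
    using 2 by (simp add: lp_norm_ereal powr_mono2 sum_nonneg)
qed

lemma lp_norm_cong_abs:
  assumes "1 \<le> p" "dim_vec x = dim_vec y" "\<And>j. j < dim_vec x \<Longrightarrow> \<bar>x $ j\<bar> = \<bar>y $ j\<bar>"
  shows "lp_norm p x = lp_norm p y"
  using assms by (intro antisym lp_norm_mono) auto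

lemma lp_norm_smult:
  assumes "1 \<le> p"
  shows "lp_norm p (c \<cdot>\<^sub>v x) = \<bar>c\<bar> * lp_norm p x"
  using assms
proof (cases rule: ereal_ge_1_cases)
  case 1
  have "mono (\<lambda>t. \<bar>c\<bar> * t)" by (simp add: mono_def mult_left_mono)
  then have "\<bar>c\<bar> * Max (insert 0 ((\<lambda>j. \<bar>x $ j\<bar>) ` {..<dim_vec x}))
      = Max ((\<lambda>t. \<bar>c\<bar> * t) ` insert 0 ((\<lambda>j. \<bar>x $ j\<bar>) ` {..<dim_vec x}))"
    by (rule mono_Max_commute) auto
  then show ?thesis unfolding 1 lp_norm_infinity by (simp add: image_image abs_mult)
next
  case (2 q)
  have "(\<Sum>j<dim_vec x. \<bar>c * x $ j\<bar> powr q) = \<bar>c\<bar> powr q * (\<Sum>j<dim_vec x. \<bar>x $ j\<bar> powr q)"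
    by (simp add: abs_mult powr_mult sum_distrib_left)
  then show ?thesis using 2 by (simp add: lp_norm_ereal powr_mult powr_powr sum_nonneg)
qed

lemma lp_norm_zero_vec:
  assumes "1 \<le> p"
  shows "lp_norm p (0\<^sub>v s) = 0"
proof -
  have "0\<^sub>v s = 0 \<cdot>\<^sub>v (0\<^sub>v s :: real vec)" by (intro eq_vecI) auto
  then show ?thesis using lp_norm_smult[OF assms, of 0 "0\<^sub>v s"] by simp
qed

lemma lp_norm_eq_0_iff:
  assumes "1 \<le> p"
  shows "lp_norm p x = 0 \<longleftrightarrow> x = 0\<^sub>v (dim_vec x)"
proof
  assume "lp_norm p x = 0"
  then have "x $ j = 0" if "j < dim_vec x" for j
    using abs_le_lp_norm[OF assms that] by simp
  then show "x = 0\<^sub>v (dim_vec x)" by (intro eq_vecI) auto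
qed (metis lp_norm_zero_vec[OF assms])

lemma powr_convex_comb_le:
  fixes u v l q :: real
  assumes "0 \<le> u" "0 \<le> v" "0 \<le> l" "l \<le> 1" "1 \<le> q"
  shows "(l * u + (1 - l) * v) powr q \<le> l * u powr q + (1 - l) * v powr q"
proof -
  have shrink: "(t * w) powr q \<le> t * w powr q" if "0 \<le> t" "t \<le> 1" "0 \<le> w" for t w :: real
    using that assms(5) powr_le_one_le[of t q]
    by (cases "t = 0") (auto simp: powr_mult intro: mult_right_mono)
  consider "u = 0" | "v = 0" | "0 < u" "0 < v" using assms by linarith
  then show ?thesis
  proof cases
    case 3
    then show ?thesis
      using convex_onD[OF powr_convex[OF assms(5)], of "1 - l" u v] assms by simp
  qed (use shrink assms in auto)
qed

lemma lp_norm_powr: "1 \<le> q \<Longrightarrow> lp_norm (ereal q) x powr q = (\<Sum>j<dim_vec x. \<bar>x $ j\<bar> powr q)"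
  by (simp add: lp_norm_ereal powr_powr sum_nonneg)

lemma abs_add_powr_le:
  fixes a b \<alpha> \<beta> q :: real
  assumes "0 < \<alpha>" "0 < \<beta>" "1 \<le> q"
  shows "\<bar>a + b\<bar> powr q
    \<le> (\<alpha> + \<beta>) powr q * (\<alpha> / (\<alpha> + \<beta>) * (\<bar>a\<bar> / \<alpha>) powr q + \<beta> / (\<alpha> + \<beta>) * (\<bar>b\<bar> / \<beta>) powr q)"
proof -
  let ?l = "\<alpha> / (\<alpha> + \<beta>)"
  have l: "0 \<le> ?l" "?l \<le> 1" "1 - ?l = \<beta> / (\<alpha> + \<beta>)" using assms by (auto simp: field_simps)
  have "(\<alpha> + \<beta>) * (?l * (\<bar>a\<bar> / \<alpha>) + (1 - ?l) * (\<bar>b\<bar> / \<beta>))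
      = ((\<alpha> + \<beta>) * ?l) * (\<bar>a\<bar> / \<alpha>) + ((\<alpha> + \<beta>) * (1 - ?l)) * (\<bar>b\<bar> / \<beta>)"
    by (simp only: distrib_left mult.assoc)
  also have "\<dots> = \<bar>a\<bar> + \<bar>b\<bar>"
    unfolding l(3) using assms by simp
  finally
  have "\<bar>a + b\<bar> \<le> (\<alpha> + \<beta>) * (?l * (\<bar>a\<bar> / \<alpha>) + (1 - ?l) * (\<bar>b\<bar> / \<beta>))"
    by (simp add: abs_triangle_ineq)
  then have "\<bar>a + b\<bar> powr q \<le> ((\<alpha> + \<beta>) * (?l * (\<bar>a\<bar> / \<alpha>) + (1 - ?l) * (\<bar>b\<bar> / \<beta>))) powr q"
    using assms by (intro powr_mono2) auto
  also have "\<dots> = (\<alpha> + \<beta>) powr q * (?l * (\<bar>a\<bar> / \<alpha>) + (1 - ?l) * (\<bar>b\<bar> / \<beta>)) powr q"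
    using assms l by (simp add: powr_mult)
  also have "\<dots> \<le> (\<alpha> + \<beta>) powr q * (?l * (\<bar>a\<bar> / \<alpha>) powr q + (1 - ?l) * (\<bar>b\<bar> / \<beta>) powr q)"
    using assms l by (intro mult_left_mono powr_convex_comb_le) auto
  finally show ?thesis unfolding l(3) .
qed

lemma lp_norm_triangle_ereal:
  assumes q: "1 \<le> q" and dim: "dim_vec y = dim_vec x"
  shows "lp_norm (ereal q) (x + y) \<le> lp_norm (ereal q) x + lp_norm (ereal q) y"
proof -
  let ?n = "dim_vec x"
  define \<alpha> where "\<alpha> = lp_norm (ereal q) x"
  define \<beta> where "\<beta> = lp_norm (ereal q) y"
  have "0 \<le> \<alpha>" "0 \<le> \<beta>" using lp_norm_nonneg q by (auto simp: \<alpha>_def \<beta>_def)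
  then consider "\<alpha> = 0" | "\<beta> = 0" | "0 < \<alpha>" "0 < \<beta>" by linarith
  then show ?thesis
  proof cases
    case 1
    then have "x $ j = 0" if "j < ?n" for j
      using abs_le_lp_norm[of "ereal q" j x] that q by (simp add: \<alpha>_def)
    then have "x + y = y" using dim by (intro eq_vecI) auto
    then show ?thesis using 1 by (simp add: \<alpha>_def)
  next
    case 2
    then have "y $ j = 0" if "j < ?n" for j
      using abs_le_lp_norm[of "ereal q" j y] that q dim by (simp add: \<beta>_def)
    then have "x + y = x" using dim by (intro eq_vecI) auto
    then show ?thesis using 2 by (simp add: \<beta>_def)
  next
    case 3
    have sums: "(\<Sum>j<?n. \<bar>x $ j\<bar> powr q) = \<alpha> powr q" "(\<Sum>j<?n. \<bar>y $ j\<bar> powr q) = \<beta> powr q"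
      using q dim by (simp_all add: \<alpha>_def \<beta>_def lp_norm_powr)
    have "lp_norm (ereal q) (x + y) powr q = (\<Sum>j<?n. \<bar>x $ j + y $ j\<bar> powr q)"
      using q dim by (simp add: lp_norm_powr)
    also have "\<dots> \<le> (\<Sum>j<?n. (\<alpha> + \<beta>) powr q
        * (\<alpha> / (\<alpha> + \<beta>) * (\<bar>x $ j\<bar> / \<alpha>) powr q + \<beta> / (\<alpha> + \<beta>) * (\<bar>y $ j\<bar> / \<beta>) powr q))"
      using 3 q by (intro sum_mono abs_add_powr_le)
    also have "\<dots> = (\<alpha> + \<beta>) powr q * (\<alpha> / (\<alpha> + \<beta>) * ((\<Sum>j<?n. \<bar>x $ j\<bar> powr q) / \<alpha> powr q)
        + \<beta> / (\<alpha> + \<beta>) * ((\<Sum>j<?n. \<bar>y $ j\<bar> powr q) / \<beta> powr q))"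
      using 3 by (simp add: sum_distrib_left sum_distrib_right sum.distrib powr_divide
          sum_divide_distrib algebra_simps)
    also have "\<dots> = (\<alpha> + \<beta>) powr q"
      using 3 by (simp add: sums flip: add_divide_distrib)
    finally have "lp_norm (ereal q) (x + y) powr q \<le> (\<alpha> + \<beta>) powr q" .
    from powr_mono2[OF _ _ this, of "1 / q"]
    have "(lp_norm (ereal q) (x + y) powr q) powr (1 / q) \<le> ((\<alpha> + \<beta>) powr q) powr (1 / q)"
      using q by simp
    then show ?thesis
      using q 3 lp_norm_nonneg[of "ereal q" "x + y"] by (simp add: powr_powr \<alpha>_def \<beta>_def)
  qed
qed

lemma lp_norm_triangle:
  assumes "1 \<le> p" "dim_vec y = dim_vec x"
  shows "lp_norm p (x + y) \<le> lp_norm p x + lp_norm p y"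
  using assms(1)
proof (cases rule: ereal_ge_1_cases)
  case 1
  have "\<bar>(x + y) $ j\<bar> \<le> lp_norm \<infinity> x + lp_norm \<infinity> y" if "j < dim_vec (x + y)" for j
    using that assms(2) abs_le_lp_norm[of \<infinity> j x] abs_le_lp_norm[of \<infinity> j y] by simp
  then show ?thesis
    unfolding 1 by (intro lp_norm_infinity_le add_nonneg_nonneg lp_norm_nonneg) auto
next
  case (2 q)
  then show ?thesis using lp_norm_triangle_ereal assms(2) by simp
qed

lemma lp_norm_le_l1:
  assumes "1 \<le> p"
  shows "lp_norm p x \<le> lp_norm p (vec (dim_vec x) (\<lambda>_. 1)) * (\<Sum>j<dim_vec x. \<bar>x $ j\<bar>)"
proof -
  let ?S = "\<Sum>j<dim_vec x. \<bar>x $ j\<bar>"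
  have "lp_norm p x \<le> lp_norm p (?S \<cdot>\<^sub>v vec (dim_vec x) (\<lambda>_. 1))"
    using assms by (intro lp_norm_mono) (auto intro: member_le_sum)
  then show ?thesis using lp_norm_smult[OF assms] by (simp add: sum_nonneg mult.commute)
qed

lemma lp_norm_iterated:
  assumes p: "1 \<le> p" and idx: "bij_betw (\<lambda>(i, t). idx i t) ({..<a} \<times> {..<b}) {..<dim_vec z}"
  shows "lp_norm p z = lp_norm p (vec a (\<lambda>i. lp_norm p (vec b (\<lambda>t. z $ idx i t))))"
  using p
proof (cases rule: ereal_ge_1_cases)
  case 1
  let ?w = "vec a (\<lambda>i. lp_norm \<infinity> (vec b (\<lambda>t. z $ idx i t)))"
  have idx_less: "idx i t < dim_vec z" if "i < a" "t < b" for i t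
    using bij_betwE[OF idx] that by auto
  have "\<bar>z $ j\<bar> \<le> lp_norm \<infinity> ?w" if j: "j < dim_vec z" for j
  proof -
    have "j \<in> (\<lambda>(i, t). idx i t) ` ({..<a} \<times> {..<b})"
      using j bij_betw_imp_surj_on[OF idx] by simp
    then obtain i t where it: "i < a" "t < b" "j = idx i t" by auto
    have "\<bar>z $ j\<bar> \<le> lp_norm \<infinity> (vec b (\<lambda>t. z $ idx i t))"
      using abs_le_lp_norm[of \<infinity> t "vec b (\<lambda>t. z $ idx i t)"] it by simp
    also have "\<dots> \<le> lp_norm \<infinity> ?w"
      using abs_le_lp_norm[of \<infinity> i ?w] it lp_norm_nonneg[of \<infinity>] by simp
    finally show ?thesis .
  qed
  moreover have "\<bar>?w $ i\<bar> \<le> lp_norm \<infinity> z" if "i < a" for i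
  proof -
    have "lp_norm \<infinity> (vec b (\<lambda>t. z $ idx i t)) \<le> lp_norm \<infinity> z"
      using that idx_less by (intro lp_norm_infinity_le lp_norm_nonneg) (auto intro!: abs_le_lp_norm)
    then show ?thesis using that lp_norm_nonneg[of \<infinity>] by simp
  qed
  ultimately show ?thesis
    unfolding 1 by (intro antisym lp_norm_infinity_le lp_norm_nonneg) auto
next
  case (2 q)
  have "(\<Sum>i<a. \<bar>lp_norm (ereal q) (vec b (\<lambda>t. z $ idx i t))\<bar> powr q)
      = (\<Sum>i<a. \<Sum>t<b. \<bar>z $ idx i t\<bar> powr q)"
    using 2 lp_norm_nonneg[of "ereal q"] by (simp add: lp_norm_powr)
  also have "\<dots> = (\<Sum>(i, t)\<in>{..<a} \<times> {..<b}. \<bar>z $ idx i t\<bar> powr q)"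
    by (rule sum.cartesian_product)
  also have "\<dots> = (\<Sum>j<dim_vec z. \<bar>z $ j\<bar> powr q)"
    using sum.reindex_bij_betw[OF idx, of "\<lambda>j. \<bar>z $ j\<bar> powr q"] by (simp add: case_prod_beta')
  finally show ?thesis using 2 by (simp add: lp_norm_ereal)
qed

section \<open>Induced norms and matrix measures\<close>

lemma mult_mat_vec_index:
  assumes "M \<in> carrier_mat r c" "x \<in> carrier_vec c" "i < r"
  shows "(M *\<^sub>v x) $ i = (\<Sum>j<c. M $$ (i, j) * x $ j)"
  using assms by (simp add: scalar_prod_def lessThan_atLeast0)

lemma smult_mat_mult_vec:
  fixes M :: "real mat"
  assumes "M \<in> carrier_mat r c" "x \<in> carrier_vec c"
  shows "(e \<cdot>\<^sub>m M) *\<^sub>v x = e \<cdot>\<^sub>v (M *\<^sub>v x)"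
  using assms by (intro eq_vecI) (auto simp: smult_scalar_prod_distrib[of _ c])

lemma mult_mat_vec_zero [simp]: "M \<in> carrier_mat r c \<Longrightarrow> M *\<^sub>v 0\<^sub>v c = 0\<^sub>v r"
  by (intro eq_vecI) auto

lemma one_plus_smult_mult_vec:
  fixes M :: "real mat"
  assumes "M \<in> carrier_mat s s" "x \<in> carrier_vec s"
  shows "(1\<^sub>m s + e \<cdot>\<^sub>m M) *\<^sub>v x = x + e \<cdot>\<^sub>v (M *\<^sub>v x)"
  using assms one_mult_mat_vec[of x s]
  by (simp add: add_mult_distrib_mat_vec[of _ s s] smult_mat_mult_vec)

locale vec_norm =
  fixes s :: nat and N :: "real vec \<Rightarrow> real"
  assumes is_norm: "is_vec_norm s N"
    and dim_pos: "0 < s"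
    \<comment> \<open>equivalence with the l1 norm, which makes induced norms finite\<close>
    and coord_bound: "\<exists>c. \<forall>x\<in>carrier_vec s. \<forall>j<s. \<bar>x $ j\<bar> \<le> c * N x"
    and l1_bound: "\<exists>C. \<forall>x\<in>carrier_vec s. N x \<le> C * (\<Sum>j<s. \<bar>x $ j\<bar>)"
begin

lemma nonneg: "x \<in> carrier_vec s \<Longrightarrow> 0 \<le> N x"
  using is_norm by (simp add: is_vec_norm_def)

lemma eq_0_iff: "x \<in> carrier_vec s \<Longrightarrow> N x = 0 \<longleftrightarrow> x = 0\<^sub>v s"
  using is_norm by (simp add: is_vec_norm_def)

lemma smult: "x \<in> carrier_vec s \<Longrightarrow> N (c \<cdot>\<^sub>v x) = \<bar>c\<bar> * N x"
  using is_norm by (simp add: is_vec_norm_def)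

lemma triangle: "x \<in> carrier_vec s \<Longrightarrow> y \<in> carrier_vec s \<Longrightarrow> N (x + y) \<le> N x + N y"
  using is_norm by (simp add: is_vec_norm_def)

lemma zero [simp]: "N (0\<^sub>v s) = 0"
  using eq_0_iff by simp

lemma pos: "x \<in> carrier_vec s \<Longrightarrow> x \<noteq> 0\<^sub>v s \<Longrightarrow> 0 < N x"
  using nonneg eq_0_iff by (simp add: order_less_le)

lemma unit_vec_0: "unit_vec s 0 \<in> carrier_vec s" "unit_vec s 0 \<noteq> (0\<^sub>v s :: real vec)"
  using dim_pos by (auto simp: unit_vec_eq)

lemma mult_vec_bounded:
  assumes M: "M \<in> carrier_mat s s"
  shows "\<exists>K. \<forall>x\<in>carrier_vec s. N (M *\<^sub>v x) \<le> K * N x"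
proof -
  obtain c where c: "\<forall>x\<in>carrier_vec s. \<forall>j<s. \<bar>x $ j\<bar> \<le> c * N x" using coord_bound by blast
  obtain C where C: "\<forall>x\<in>carrier_vec s. N x \<le> C * (\<Sum>j<s. \<bar>x $ j\<bar>)" using l1_bound by blast
  define S where "S = (\<Sum>i<s. \<Sum>j<s. \<bar>M $$ (i, j)\<bar>)"
  have "N (M *\<^sub>v x) \<le> (\<bar>C\<bar> * S * \<bar>c\<bar>) * N x" if x: "x \<in> carrier_vec s" for x
  proof -
    have "\<bar>x $ j\<bar> \<le> \<bar>c\<bar> * N x" if "j < s" for j
      using c x that nonneg[OF x] by (meson abs_ge_self mult_right_mono order_trans)
    then have entry: "\<bar>(M *\<^sub>v x) $ i\<bar> \<le> (\<Sum>j<s. \<bar>M $$ (i, j)\<bar>) * (\<bar>c\<bar> * N x)" if "i < s" for i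
      unfolding mult_mat_vec_index[OF M x that] sum_distrib_right
      by (intro order_trans[OF sum_abs] sum_mono) (auto simp: abs_mult intro: mult_left_mono)
    have "N (M *\<^sub>v x) \<le> C * (\<Sum>i<s. \<bar>(M *\<^sub>v x) $ i\<bar>)"
      using C mult_mat_vec_carrier[OF M x] by blast
    also have "\<dots> \<le> \<bar>C\<bar> * (\<Sum>i<s. \<bar>(M *\<^sub>v x) $ i\<bar>)"
      by (intro mult_right_mono) (auto intro: sum_nonneg)
    also have "\<dots> \<le> \<bar>C\<bar> * (\<Sum>i<s. (\<Sum>j<s. \<bar>M $$ (i, j)\<bar>) * (\<bar>c\<bar> * N x))"
      using entry by (intro mult_left_mono sum_mono) auto
    finally show ?thesis by (simp add: S_def sum_distrib_right mult.assoc)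
  qed
  then show ?thesis by blast
qed

lemma bdd_above_ratios:
  assumes "M \<in> carrier_mat s s"
  shows "bdd_above {N (M *\<^sub>v x) / N x | x. x \<in> carrier_vec s \<and> x \<noteq> 0\<^sub>v s}"
proof -
  obtain K where "\<forall>x\<in>carrier_vec s. N (M *\<^sub>v x) \<le> K * N x"
    using mult_vec_bounded[OF assms] by blast
  then show ?thesis by (intro bdd_aboveI[of _ K]) (auto simp: pos divide_le_eq)
qed

lemma ratio_le_induced_norm:
  assumes "M \<in> carrier_mat s s" "x \<in> carrier_vec s" "x \<noteq> 0\<^sub>v s"
  shows "N (M *\<^sub>v x) / N x \<le> induced_norm N s M"
  unfolding induced_norm_def using assms bdd_above_ratios[OF assms(1)] by (intro cSup_upper) auto

lemma mult_vec_le_induced_norm: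
  assumes "M \<in> carrier_mat s s" "x \<in> carrier_vec s"
  shows "N (M *\<^sub>v x) \<le> induced_norm N s M * N x"
proof (cases "x = 0\<^sub>v s")
  case True
  then show ?thesis using assms by simp
next
  case False
  then show ?thesis using ratio_le_induced_norm[OF assms False] pos[OF assms(2) False]
    by (simp add: divide_le_eq)
qed

lemma induced_norm_le:
  assumes "\<And>x. x \<in> carrier_vec s \<Longrightarrow> N (M *\<^sub>v x) \<le> K * N x"
  shows "induced_norm N s M \<le> K"
  unfolding induced_norm_def
  using assms unit_vec_0 by (intro cSup_least) (blast, auto simp: pos divide_le_eq)

lemma induced_norm_nonneg:
  assumes "M \<in> carrier_mat s s"
  shows "0 \<le> induced_norm N s M"
  using ratio_le_induced_norm[OF assms unit_vec_0] assms unit_vec_0 nonneg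
  by (meson divide_nonneg_nonneg mult_mat_vec_carrier order_trans)

abbreviation measure_quotient :: "real mat \<Rightarrow> real \<Rightarrow> real" where
  "measure_quotient M e \<equiv> (induced_norm N s (1\<^sub>m s + e \<cdot>\<^sub>m M) - 1) / e"

lemma le_induced_norm_one_plus:
  assumes "M \<in> carrier_mat s s" "x \<in> carrier_vec s"
  shows "N (x + e \<cdot>\<^sub>v (M *\<^sub>v x)) \<le> induced_norm N s (1\<^sub>m s + e \<cdot>\<^sub>m M) * N x"
  using mult_vec_le_induced_norm[of "1\<^sub>m s + e \<cdot>\<^sub>m M" x] assms
  by (simp add: one_plus_smult_mult_vec)

lemma induced_norm_one_plus_le:
  assumes "M \<in> carrier_mat s s" "\<And>x. x \<in> carrier_vec s \<Longrightarrow> N (x + e \<cdot>\<^sub>v (M *\<^sub>v x)) \<le> K * N x"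
  shows "induced_norm N s (1\<^sub>m s + e \<cdot>\<^sub>m M) \<le> K"
  using assms by (intro induced_norm_le) (simp add: one_plus_smult_mult_vec)

lemma measure_quotient_mono:
  assumes M: "M \<in> carrier_mat s s" and ab: "0 < a" "a \<le> b"
  shows "measure_quotient M a \<le> measure_quotient M b"
proof -
  let ?f = "\<lambda>e. induced_norm N s (1\<^sub>m s + e \<cdot>\<^sub>m M)"
  have "N (x + a \<cdot>\<^sub>v (M *\<^sub>v x)) \<le> ((a / b) * ?f b + (1 - a / b)) * N x"
    if x: "x \<in> carrier_vec s" for x
  proof -
    have Mx: "M *\<^sub>v x \<in> carrier_vec s" using M x by auto
    have "x + a \<cdot>\<^sub>v (M *\<^sub>v x) = (a / b) \<cdot>\<^sub>v (x + b \<cdot>\<^sub>v (M *\<^sub>v x)) + (1 - a / b) \<cdot>\<^sub>v x"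
      using ab x Mx M by (intro eq_vecI) (auto simp: field_simps)
    then have "N (x + a \<cdot>\<^sub>v (M *\<^sub>v x)) \<le> (a / b) * N (x + b \<cdot>\<^sub>v (M *\<^sub>v x)) + (1 - a / b) * N x"
      using triangle[of "(a / b) \<cdot>\<^sub>v (x + b \<cdot>\<^sub>v (M *\<^sub>v x))" "(1 - a / b) \<cdot>\<^sub>v x"] x Mx ab
      by (simp add: smult)
    also have "\<dots> \<le> (a / b) * (?f b * N x) + (1 - a / b) * N x"
      using le_induced_norm_one_plus[OF M x] ab by (intro add_right_mono mult_left_mono) auto
    finally show ?thesis by (simp add: algebra_simps)
  qed
  then have "?f a - 1 \<le> (a / b) * (?f b - 1)"
    using induced_norm_one_plus_le[OF M] by (fastforce simp: algebra_simps)
  then have "measure_quotient M a \<le> ((a / b) * (?f b - 1)) / a"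
    using ab by (intro divide_right_mono) auto
  also have "\<dots> = measure_quotient M b" using ab by simp
  finally show ?thesis .
qed

lemma measure_quotient_lower_bound:
  assumes M: "M \<in> carrier_mat s s" and e: "0 < e"
  shows "- induced_norm N s M \<le> measure_quotient M e"
proof -
  let ?x = "unit_vec s 0 :: real vec"
  have Mx: "M *\<^sub>v ?x \<in> carrier_vec s" using M unit_vec_0 by auto
  have "?x = (?x + e \<cdot>\<^sub>v (M *\<^sub>v ?x)) + (- e) \<cdot>\<^sub>v (M *\<^sub>v ?x)"
    using Mx M by (intro eq_vecI) auto
  then have "N ?x \<le> N (?x + e \<cdot>\<^sub>v (M *\<^sub>v ?x)) + e * N (M *\<^sub>v ?x)"
    using triangle[of "?x + e \<cdot>\<^sub>v (M *\<^sub>v ?x)" "(- e) \<cdot>\<^sub>v (M *\<^sub>v ?x)"] Mx e unit_vec_0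
    by (simp add: smult)
  also have "\<dots> \<le> (induced_norm N s (1\<^sub>m s + e \<cdot>\<^sub>m M) + e * induced_norm N s M) * N ?x"
    using le_induced_norm_one_plus[OF M] mult_vec_le_induced_norm[OF M] unit_vec_0 e
    by (simp add: distrib_right mult.assoc add_mono)
  finally have "1 \<le> induced_norm N s (1\<^sub>m s + e \<cdot>\<^sub>m M) + e * induced_norm N s M"
    using pos[OF unit_vec_0] by simp
  then show ?thesis using e by (simp add: field_simps)
qed

lemma tendsto_matrix_measure:
  assumes M: "M \<in> carrier_mat s s"
  shows "(measure_quotient M \<longlongrightarrow> matrix_measure N s M) (at_right 0)"
proof -
  let ?g = "measure_quotient M"
  have bdd: "bdd_below (?g ` {0<..})"
    using measure_quotient_lower_bound[OF M] by (intro bdd_belowI) auto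
  have "(?g \<longlongrightarrow> Inf (?g ` {0<..})) (at_right 0)"
  proof (rule order_tendstoI)
    fix y assume "y < Inf (?g ` {0<..})"
    then have "y < ?g e" if "0 < e" for e
      using cInf_lower[OF _ bdd, of "?g e"] that by fastforce
    then show "eventually (\<lambda>e. y < ?g e) (at_right 0)"
      unfolding eventually_at_right_field by (intro exI[of _ 1]) auto
  next
    fix y assume "Inf (?g ` {0<..}) < y"
    then obtain e0 where e0: "0 < e0" "?g e0 < y" by (auto simp: cInf_less_iff[OF _ bdd])
    then have "?g e < y" if "0 < e" "e < e0" for e
      using measure_quotient_mono[OF M, of e e0] that by auto
    then show "eventually (\<lambda>e. ?g e < y) (at_right 0)"
      unfolding eventually_at_right_field using e0 by blast
  qed
  moreover from this have "matrix_measure N s M = Inf (?g ` {0<..})"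
    unfolding matrix_measure_def by (intro tendsto_Lim) auto
  ultimately show ?thesis by simp
qed

lemma tendsto_induced_norm_one_plus:
  assumes M: "M \<in> carrier_mat s s"
  shows "((\<lambda>e. induced_norm N s (1\<^sub>m s + e \<cdot>\<^sub>m M)) \<longlongrightarrow> 1) (at_right 0)"
proof -
  have "((\<lambda>e. 1 + e * measure_quotient M e) \<longlongrightarrow> 1 + 0 * matrix_measure N s M) (at_right 0)"
    by (intro tendsto_intros tendsto_matrix_measure[OF M])
  moreover have "eventually (\<lambda>e. 1 + e * measure_quotient M e = induced_norm N s (1\<^sub>m s + e \<cdot>\<^sub>m M)) (at_right 0)"
    unfolding eventually_at_right_field by (intro exI[of _ 1]) auto
  ultimately show ?thesis by (auto intro: Lim_transform_eventually)
qed

lemma induced_norm_one_plus_add_le: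
  assumes M1: "M1 \<in> carrier_mat s s" and M2: "M2 \<in> carrier_mat s s"
  shows "induced_norm N s (1\<^sub>m s + e \<cdot>\<^sub>m (M1 + M2))
    \<le> (induced_norm N s (1\<^sub>m s + (2 * e) \<cdot>\<^sub>m M1) + induced_norm N s (1\<^sub>m s + (2 * e) \<cdot>\<^sub>m M2)) / 2"
proof (rule induced_norm_one_plus_le)
  fix x :: "real vec" assume x: "x \<in> carrier_vec s"
  have Mx: "M1 *\<^sub>v x \<in> carrier_vec s" "M2 *\<^sub>v x \<in> carrier_vec s" using M1 M2 x by auto
  have "x + e \<cdot>\<^sub>v ((M1 + M2) *\<^sub>v x)
      = (1/2) \<cdot>\<^sub>v (x + (2 * e) \<cdot>\<^sub>v (M1 *\<^sub>v x)) + (1/2) \<cdot>\<^sub>v (x + (2 * e) \<cdot>\<^sub>v (M2 *\<^sub>v x))"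
    using x Mx M1 M2 by (intro eq_vecI) (auto simp: add_mult_distrib_mat_vec[of _ s s] algebra_simps)
  then have "N (x + e \<cdot>\<^sub>v ((M1 + M2) *\<^sub>v x))
      \<le> (1/2) * N (x + (2 * e) \<cdot>\<^sub>v (M1 *\<^sub>v x)) + (1/2) * N (x + (2 * e) \<cdot>\<^sub>v (M2 *\<^sub>v x))"
    using triangle[of "(1/2) \<cdot>\<^sub>v (x + (2 * e) \<cdot>\<^sub>v (M1 *\<^sub>v x))" "(1/2) \<cdot>\<^sub>v (x + (2 * e) \<cdot>\<^sub>v (M2 *\<^sub>v x))"]
      x Mx by (simp add: smult)
  also have "\<dots> \<le> (1/2) * (induced_norm N s (1\<^sub>m s + (2 * e) \<cdot>\<^sub>m M1) * N x)
      + (1/2) * (induced_norm N s (1\<^sub>m s + (2 * e) \<cdot>\<^sub>m M2) * N x)"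
    using le_induced_norm_one_plus[OF M1 x, of "2 * e"] le_induced_norm_one_plus[OF M2 x, of "2 * e"]
    by simp
  finally show "N (x + e \<cdot>\<^sub>v ((M1 + M2) *\<^sub>v x))
      \<le> (induced_norm N s (1\<^sub>m s + (2 * e) \<cdot>\<^sub>m M1) + induced_norm N s (1\<^sub>m s + (2 * e) \<cdot>\<^sub>m M2)) / 2 * N x"
    by (simp add: algebra_simps)
qed (use M1 M2 in auto)

lemma matrix_measure_add_le:
  assumes M1: "M1 \<in> carrier_mat s s" and M2: "M2 \<in> carrier_mat s s"
  shows "matrix_measure N s (M1 + M2) \<le> matrix_measure N s M1 + matrix_measure N s M2"
proof (rule tendsto_le[OF _ _ tendsto_matrix_measure])
  have double: "filterlim (\<lambda>e::real. 2 * e) (at_right 0) (at_right 0)"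
    by (rule filterlim_times_pos[OF filterlim_ident]) auto
  show "((\<lambda>e. measure_quotient M1 (2 * e) + measure_quotient M2 (2 * e))
      \<longlongrightarrow> matrix_measure N s M1 + matrix_measure N s M2) (at_right 0)"
    by (intro tendsto_add filterlim_compose[OF tendsto_matrix_measure double] M1 M2)
  have "measure_quotient (M1 + M2) e \<le> measure_quotient M1 (2 * e) + measure_quotient M2 (2 * e)"
    if e: "0 < e" for e
  proof -
    have "measure_quotient (M1 + M2) e \<le> ((induced_norm N s (1\<^sub>m s + (2 * e) \<cdot>\<^sub>m M1)
        + induced_norm N s (1\<^sub>m s + (2 * e) \<cdot>\<^sub>m M2)) / 2 - 1) / e"
      using induced_norm_one_plus_add_le[OF M1 M2] e by (intro divide_right_mono) auto
    also have "\<dots> = measure_quotient M1 (2 * e) + measure_quotient M2 (2 * e)"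
      using e by (simp add: field_simps)
    finally show ?thesis .
  qed
  then show "eventually (\<lambda>e. measure_quotient (M1 + M2) e
      \<le> measure_quotient M1 (2 * e) + measure_quotient M2 (2 * e)) (at_right 0)"
    unfolding eventually_at_right_field by (intro exI[of _ 1]) auto
qed (use M1 M2 in auto)

lemma induced_norm_one: "induced_norm N s (1\<^sub>m s) = 1"
proof -
  have "N (1\<^sub>m s *\<^sub>v x) / N x = 1" if "x \<in> carrier_vec s" "x \<noteq> 0\<^sub>v s" for x
    using that pos[OF that] by simp
  then have "{N (1\<^sub>m s *\<^sub>v x) / N x | x. x \<in> carrier_vec s \<and> x \<noteq> 0\<^sub>v s} = {1}"
    using unit_vec_0 by (auto intro!: exI[of _ "unit_vec s 0"])
  then show ?thesis by (simp add: induced_norm_def)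
qed

lemma matrix_measure_zero: "matrix_measure N s (0\<^sub>m s s) = 0"
proof -
  have "1\<^sub>m s + e \<cdot>\<^sub>m 0\<^sub>m s s = 1\<^sub>m s" for e :: real by simp
  then show ?thesis unfolding matrix_measure_def by (simp add: induced_norm_one tendsto_Lim)
qed

lemma neg_matrix_measure_uminus_le:
  assumes "M \<in> carrier_mat s s"
  shows "- matrix_measure N s (- M) \<le> matrix_measure N s M"
  using matrix_measure_add_le[OF uminus_carrier_mat[OF assms] assms] assms
  by (simp add: matrix_measure_zero)

end

lemma vec_norm_lp_norm:
  assumes "1 \<le> p" "0 < s"
  shows "vec_norm s (lp_norm p)"
proof
  show "is_vec_norm s (lp_norm p)"
    unfolding is_vec_norm_def
    using assms lp_norm_nonneg lp_norm_eq_0_iff lp_norm_smult lp_norm_triangle by auto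
  show "\<exists>c. \<forall>x\<in>carrier_vec s. \<forall>j<s. \<bar>x $ j\<bar> \<le> c * lp_norm p x"
    using abs_le_lp_norm[OF assms(1)] by (intro exI[of _ 1]) auto
  show "\<exists>C. \<forall>x\<in>carrier_vec s. lp_norm p x \<le> C * (\<Sum>j<s. \<bar>x $ j\<bar>)"
  proof (intro exI[of _ "lp_norm p (vec s (\<lambda>_. 1))"] ballI)
    fix x :: "real vec" assume "x \<in> carrier_vec s"
    then show "lp_norm p x \<le> lp_norm p (vec s (\<lambda>_. 1)) * (\<Sum>j<s. \<bar>x $ j\<bar>)"
      using lp_norm_le_l1[OF assms(1), of x] by auto
  qed
qed (use assms in auto)

lemma neg_lp_matrix_measure_uminus_le:
  assumes "1 \<le> p" "0 < s" "M \<in> carrier_mat s s"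
  shows "- matrix_measure (lp_norm p) s (- M) \<le> matrix_measure (lp_norm p) s M"
  by (rule vec_norm.neg_matrix_measure_uminus_le[OF vec_norm_lp_norm[OF assms(1,2)] assms(3)])

lemma matrix_measure_le_of_induced_norm_le:
  assumes "vec_norm s N" "vec_norm s' N'" "M \<in> carrier_mat s s" "M' \<in> carrier_mat s' s'"
    and "\<And>e. 0 < e \<Longrightarrow> induced_norm N s (1\<^sub>m s + e \<cdot>\<^sub>m M) \<le> induced_norm N' s' (1\<^sub>m s' + e \<cdot>\<^sub>m M')"
  shows "matrix_measure N s M \<le> matrix_measure N' s' M'"
proof (rule tendsto_le[OF _ vec_norm.tendsto_matrix_measure vec_norm.tendsto_matrix_measure])
  show "eventually (\<lambda>e. vec_norm.measure_quotient s N M e \<le> vec_norm.measure_quotient s' N' M' e) (at_right 0)"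
    using assms(5) unfolding eventually_at_right_field
    by (intro exI[of _ 1]) (auto intro: divide_right_mono)
qed (use assms in auto)

lemma induced_norm_mult_le:
  assumes "vec_norm a Na" "vec_norm b Nb" and T: "0 \<le> T"
    and M: "M \<in> carrier_mat a a" and L: "L \<in> carrier_mat b b"
    and bound: "\<And>u v. u \<in> carrier_vec a \<Longrightarrow> v \<in> carrier_vec b \<Longrightarrow>
      Na (M *\<^sub>v u) * Nb (L *\<^sub>v v) \<le> T * (Na u * Nb v)"
  shows "induced_norm Na a M * induced_norm Nb b L \<le> T"
proof -
  interpret A: vec_norm a Na by fact
  interpret B: vec_norm b Nb by fact
  have "induced_norm Na a M * Nb (L *\<^sub>v v) \<le> T * Nb v" if v: "v \<in> carrier_vec b" for v
  proof (cases "Nb (L *\<^sub>v v) = 0")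
    case True
    then show ?thesis using T B.nonneg[OF v] by simp
  next
    case False
    then have pos: "0 < Nb (L *\<^sub>v v)" using B.nonneg[of "L *\<^sub>v v"] L v by fastforce
    have "induced_norm Na a M \<le> T * Nb v / Nb (L *\<^sub>v v)"
      using bound[OF _ v] pos by (intro A.induced_norm_le) (simp add: field_simps)
    then show ?thesis using pos by (simp add: field_simps)
  qed
  show ?thesis
  proof (cases "induced_norm Na a M = 0")
    case True
    then show ?thesis using T by simp
  next
    case False
    then have pos: "0 < induced_norm Na a M" using A.induced_norm_nonneg[OF M] by simp
    have "induced_norm Nb b L \<le> T / induced_norm Na a M"
      using \<open>\<And>v. _ \<Longrightarrow> induced_norm Na a M * Nb (L *\<^sub>v v) \<le> T * Nb v\<close> pos
      by (intro B.induced_norm_le) (simp add: field_simps)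
    then show ?thesis using pos by (simp add: field_simps)
  qed
qed

section \<open>Kronecker products and sums\<close>

text \<open>Same row-major convention as \<open>kronecker\<close>.\<close>

definition kron_vec :: "real vec \<Rightarrow> real vec \<Rightarrow> real vec" where
  "kron_vec u v = vec (dim_vec u * dim_vec v) (\<lambda>j. u $ (j div dim_vec v) * v $ (j mod dim_vec v))"

lemma dim_kron_vec [simp]: "dim_vec (kron_vec u v) = dim_vec u * dim_vec v"
  by (simp add: kron_vec_def)

lemma kron_vec_carrier:
  assumes "u \<in> carrier_vec a" "v \<in> carrier_vec b"
  shows "kron_vec u v \<in> carrier_vec (a * b)"
  using carrier_vecD[OF assms(1)] carrier_vecD[OF assms(2)] by (intro carrier_vecI) simp

lemma index_kron_vec:
  assumes "u \<in> carrier_vec a" "v \<in> carrier_vec b" "i < a" "t < b"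
  shows "kron_vec u v $ (i * b + t) = u $ i * v $ t"
  using carrier_vecD[OF assms(1)] carrier_vecD[OF assms(2)] row_major_index_less[OF assms(3,4)]
    row_major_div_mod[OF assms(4)]
  by (simp add: kron_vec_def)

lemma lp_norm_kron_vec:
  assumes p: "1 \<le> p"
  shows "lp_norm p (kron_vec u v) = lp_norm p u * lp_norm p v"
proof -
  let ?a = "dim_vec u" and ?b = "dim_vec v"
  have uv: "u \<in> carrier_vec ?a" "v \<in> carrier_vec ?b" by (rule carrier_vec_dim_vec)+
  have rows: "vec ?b (\<lambda>t. kron_vec u v $ (i * ?b + t)) = u $ i \<cdot>\<^sub>v v" if "i < ?a" for i
    using index_kron_vec[OF uv that] by (intro eq_vecI) auto
  have "lp_norm p (kron_vec u v) = lp_norm p (vec ?a (\<lambda>i. lp_norm p (vec ?b (\<lambda>t. kron_vec u v $ (i * ?b + t)))))"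
    using bij_betw_row_major by (intro lp_norm_iterated[OF p]) simp
  also have "\<dots> = lp_norm p (lp_norm p v \<cdot>\<^sub>v vec ?a (\<lambda>i. u $ i))"
    using lp_norm_nonneg[OF p]
    by (intro lp_norm_cong_abs[OF p]) (auto simp: rows lp_norm_smult[OF p] abs_mult)
  also have "vec ?a (\<lambda>i. u $ i) = u" by auto
  finally show ?thesis using lp_norm_smult[OF p] lp_norm_nonneg[OF p] by simp
qed

lemma kronecker_carrier:
  assumes "X \<in> carrier_mat a a'" "Y \<in> carrier_mat b b'"
  shows "kronecker X Y \<in> carrier_mat (a * b) (a' * b')"
  using assms by (simp add: kronecker_def)

lemma index_kronecker:
  assumes "X \<in> carrier_mat a a'" "Y \<in> carrier_mat b b'" "i < a" "t < b" "i' < a'" "t' < b'"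
  shows "kronecker X Y $$ (i * b + t, i' * b' + t') = X $$ (i, i') * Y $$ (t, t')"
  using assms row_major_index_less[of i a t b] row_major_index_less[of i' a' t' b']
  by (simp add: kronecker_def row_major_div_mod)

lemma kron_sum_carrier:
  assumes "X \<in> carrier_mat a a" "Y \<in> carrier_mat b b"
  shows "kron_sum X Y \<in> carrier_mat (a * b) (a * b)"
  using assms by (auto simp: kron_sum_def intro!: kronecker_carrier add_carrier_mat)

lemma kronecker_mult_vec_index:
  assumes X: "X \<in> carrier_mat a a'" and Y: "Y \<in> carrier_mat b b'" and z: "z \<in> carrier_vec (a' * b')"
    and it: "i < a" "t < b"
  shows "(kronecker X Y *\<^sub>v z) $ (i * b + t)
    = (\<Sum>i'<a'. \<Sum>t'<b'. X $$ (i, i') * Y $$ (t, t') * z $ (i' * b' + t'))"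
proof -
  have "(kronecker X Y *\<^sub>v z) $ (i * b + t) = (\<Sum>j<a' * b'. kronecker X Y $$ (i * b + t, j) * z $ j)"
    using kronecker_carrier[OF X Y] z row_major_index_less[OF it] by (rule mult_mat_vec_index)
  then show ?thesis using X Y it by (simp add: sum_row_major index_kronecker)
qed

lemma sum_delta_mult:
  assumes "finite A"
  shows "(\<Sum>i'\<in>A. (if i = i' then 1 else 0) * f i') = (if i \<in> A then f i else (0::'a::semiring_1))"
proof -
  have "(\<Sum>i'\<in>A. (if i = i' then 1 else 0) * f i') = (\<Sum>i'\<in>A. if i = i' then f i' else 0)"
    by (intro sum.cong) auto
  then show ?thesis using assms by simp
qed

lemma kronecker_one_mult_vec_index:
  assumes X: "X \<in> carrier_mat a a'" and z: "z \<in> carrier_vec (a' * b)" and it: "i < a" "t < b"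
  shows "(kronecker X (1\<^sub>m b) *\<^sub>v z) $ (i * b + t) = (X *\<^sub>v vec a' (\<lambda>i'. z $ (i' * b + t))) $ i"
proof -
  have "(kronecker X (1\<^sub>m b) *\<^sub>v z) $ (i * b + t)
      = (\<Sum>i'<a'. X $$ (i, i') * (\<Sum>t'<b. 1\<^sub>m b $$ (t, t') * z $ (i' * b + t')))"
    using kronecker_mult_vec_index[OF X one_carrier_mat z it]
    by (simp add: sum_distrib_left mult.assoc)
  then show ?thesis
    using it mult_mat_vec_index[OF X _ it(1), of "vec a' (\<lambda>i'. z $ (i' * b + t))"]
    by (simp add: sum_delta_mult)
qed

lemma one_kronecker_mult_vec_index:
  assumes Y: "Y \<in> carrier_mat b b'" and z: "z \<in> carrier_vec (a * b')" and it: "i < a" "t < b"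
  shows "(kronecker (1\<^sub>m a) Y *\<^sub>v z) $ (i * b + t) = (Y *\<^sub>v vec b' (\<lambda>t'. z $ (i * b' + t'))) $ t"
proof -
  have "(kronecker (1\<^sub>m a) Y *\<^sub>v z) $ (i * b + t)
      = (\<Sum>i'<a. \<Sum>t'<b'. 1\<^sub>m a $$ (i, i') * (Y $$ (t, t') * z $ (i' * b' + t')))"
    by (simp only: kronecker_mult_vec_index[OF one_carrier_mat Y z it] mult.assoc)
  also have "\<dots> = (\<Sum>t'<b'. \<Sum>i'<a. 1\<^sub>m a $$ (i, i') * (Y $$ (t, t') * z $ (i' * b' + t')))"
    by (rule sum.swap)
  finally show ?thesis
    using it mult_mat_vec_index[OF Y _ it(2), of "vec b' (\<lambda>t'. z $ (i * b' + t'))"]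
    by (simp add: sum_delta_mult)
qed

lemma kronecker_mult_kron_vec:
  assumes X: "X \<in> carrier_mat a a'" and Y: "Y \<in> carrier_mat b b'"
    and u: "u \<in> carrier_vec a'" and v: "v \<in> carrier_vec b'"
  shows "kronecker X Y *\<^sub>v kron_vec u v = kron_vec (X *\<^sub>v u) (Y *\<^sub>v v)"
proof (rule eq_vec_row_major[of _ a b])
  fix i t assume it: "i < a" "t < b"
  have uv: "kron_vec u v \<in> carrier_vec (a' * b')" using u v by (rule kron_vec_carrier)
  have "(kronecker X Y *\<^sub>v kron_vec u v) $ (i * b + t)
      = (\<Sum>i'<a'. \<Sum>t'<b'. (X $$ (i, i') * u $ i') * (Y $$ (t, t') * v $ t'))"
  proof -
    have "kron_vec u v $ (i' * b' + t') = u $ i' * v $ t'" if "i' < a'" "t' < b'" for i' t'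
      using u v that by (rule index_kron_vec)
    then show ?thesis
      unfolding kronecker_mult_vec_index[OF X Y uv it] by (intro sum.cong refl) (simp add: mult_ac)
  qed
  also have "\<dots> = (X *\<^sub>v u) $ i * (Y *\<^sub>v v) $ t"
    unfolding mult_mat_vec_index[OF X u it(1)] mult_mat_vec_index[OF Y v it(2)] sum_product ..
  finally show "(kronecker X Y *\<^sub>v kron_vec u v) $ (i * b + t) = kron_vec (X *\<^sub>v u) (Y *\<^sub>v v) $ (i * b + t)"
    using index_kron_vec[OF mult_mat_vec_carrier[OF X u] mult_mat_vec_carrier[OF Y v] it] by simp
qed (use kronecker_carrier[OF X Y] X Y in simp_all)

lemma lp_norm_columnwise_le:
  assumes p: "1 \<le> p" and a: "0 < a" and Z: "Z \<in> carrier_mat a a"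
    and z: "z \<in> carrier_vec (a * b)" and w: "w \<in> carrier_vec (a * b)"
    and cols: "\<And>t. t < b \<Longrightarrow> vec a (\<lambda>i. w $ (i * b + t)) = Z *\<^sub>v vec a (\<lambda>i. z $ (i * b + t))"
  shows "lp_norm p w \<le> induced_norm (lp_norm p) a Z * lp_norm p z"
proof -
  interpret vec_norm a "lp_norm p" by (rule vec_norm_lp_norm[OF p a])
  let ?col = "\<lambda>x t. vec a (\<lambda>i. x $ (i * b + t))"
  have iter: "lp_norm p x = lp_norm p (vec b (\<lambda>t. lp_norm p (?col x t)))"
    if "x \<in> carrier_vec (a * b)" for x
    using that bij_betw_col_major[of b a] by (intro lp_norm_iterated[OF p]) auto
  have "lp_norm p w \<le> lp_norm p (induced_norm (lp_norm p) a Z \<cdot>\<^sub>v vec b (\<lambda>t. lp_norm p (?col z t)))"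
    unfolding iter[OF w]
    using mult_vec_le_induced_norm[OF Z] induced_norm_nonneg[OF Z] lp_norm_nonneg[OF p]
    by (intro lp_norm_mono[OF p]) (auto simp: cols)
  also have "\<dots> = induced_norm (lp_norm p) a Z * lp_norm p z"
    using lp_norm_smult[OF p] induced_norm_nonneg[OF Z] iter[OF z] by simp
  finally show ?thesis .
qed

lemma lp_norm_rowwise_le:
  assumes p: "1 \<le> p" and b: "0 < b" and Z: "Z \<in> carrier_mat b b"
    and z: "z \<in> carrier_vec (a * b)" and w: "w \<in> carrier_vec (a * b)"
    and rows: "\<And>i. i < a \<Longrightarrow> vec b (\<lambda>t. w $ (i * b + t)) = Z *\<^sub>v vec b (\<lambda>t. z $ (i * b + t))"
  shows "lp_norm p w \<le> induced_norm (lp_norm p) b Z * lp_norm p z"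
proof -
  interpret vec_norm b "lp_norm p" by (rule vec_norm_lp_norm[OF p b])
  let ?row = "\<lambda>x i. vec b (\<lambda>t. x $ (i * b + t))"
  have iter: "lp_norm p x = lp_norm p (vec a (\<lambda>i. lp_norm p (?row x i)))"
    if "x \<in> carrier_vec (a * b)" for x
    using that bij_betw_row_major[of b a] by (intro lp_norm_iterated[OF p]) auto
  have "lp_norm p w \<le> lp_norm p (induced_norm (lp_norm p) b Z \<cdot>\<^sub>v vec a (\<lambda>i. lp_norm p (?row z i)))"
    unfolding iter[OF w]
    using mult_vec_le_induced_norm[OF Z] induced_norm_nonneg[OF Z] lp_norm_nonneg[OF p]
    by (intro lp_norm_mono[OF p]) (auto simp: rows)
  also have "\<dots> = induced_norm (lp_norm p) b Z * lp_norm p z"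
    using lp_norm_smult[OF p] induced_norm_nonneg[OF Z] iter[OF z] by simp
  finally show ?thesis .
qed

lemma matrix_measure_kronecker_one_le:
  assumes p: "1 \<le> p" and a: "0 < a" and b: "0 < b" and X: "X \<in> carrier_mat a a"
  shows "matrix_measure (lp_norm p) (a * b) (kronecker X (1\<^sub>m b)) \<le> matrix_measure (lp_norm p) a X"
proof (rule matrix_measure_le_of_induced_norm_le[OF vec_norm_lp_norm[OF p] vec_norm_lp_norm[OF p a]])
  interpret vec_norm "a * b" "lp_norm p" using vec_norm_lp_norm[OF p] a b by simp
  have K: "kronecker X (1\<^sub>m b) \<in> carrier_mat (a * b) (a * b)"
    using kronecker_carrier[OF X one_carrier_mat] .
  fix e :: real
  show "induced_norm (lp_norm p) (a * b) (1\<^sub>m (a * b) + e \<cdot>\<^sub>m kronecker X (1\<^sub>m b))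
      \<le> induced_norm (lp_norm p) a (1\<^sub>m a + e \<cdot>\<^sub>m X)"
  proof (rule induced_norm_one_plus_le[OF K])
    fix z :: "real vec" assume z: "z \<in> carrier_vec (a * b)"
    have "vec a (\<lambda>i. (z + e \<cdot>\<^sub>v (kronecker X (1\<^sub>m b) *\<^sub>v z)) $ (i * b + t))
        = (1\<^sub>m a + e \<cdot>\<^sub>m X) *\<^sub>v vec a (\<lambda>i. z $ (i * b + t))" if t: "t < b" for t
      using X K z t
      by (intro eq_vecI) (auto simp: one_plus_smult_mult_vec[OF X] kronecker_one_mult_vec_index[OF X z _ t]
          row_major_index_less simp del: index_mult_mat_vec)
    then show "lp_norm p (z + e \<cdot>\<^sub>v (kronecker X (1\<^sub>m b) *\<^sub>v z))
        \<le> induced_norm (lp_norm p) a (1\<^sub>m a + e \<cdot>\<^sub>m X) * lp_norm p z"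
      using X K z by (intro lp_norm_columnwise_le[OF p a _ z]) auto
  qed
qed (use a b X kronecker_carrier[OF X one_carrier_mat] in auto)

lemma matrix_measure_one_kronecker_le:
  assumes p: "1 \<le> p" and a: "0 < a" and b: "0 < b" and Y: "Y \<in> carrier_mat b b"
  shows "matrix_measure (lp_norm p) (a * b) (kronecker (1\<^sub>m a) Y) \<le> matrix_measure (lp_norm p) b Y"
proof (rule matrix_measure_le_of_induced_norm_le[OF vec_norm_lp_norm[OF p] vec_norm_lp_norm[OF p b]])
  interpret vec_norm "a * b" "lp_norm p" using vec_norm_lp_norm[OF p] a b by simp
  have K: "kronecker (1\<^sub>m a) Y \<in> carrier_mat (a * b) (a * b)"
    using kronecker_carrier[OF one_carrier_mat Y] .
  fix e :: real
  show "induced_norm (lp_norm p) (a * b) (1\<^sub>m (a * b) + e \<cdot>\<^sub>m kronecker (1\<^sub>m a) Y)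
      \<le> induced_norm (lp_norm p) b (1\<^sub>m b + e \<cdot>\<^sub>m Y)"
  proof (rule induced_norm_one_plus_le[OF K])
    fix z :: "real vec" assume z: "z \<in> carrier_vec (a * b)"
    have "vec b (\<lambda>t. (z + e \<cdot>\<^sub>v (kronecker (1\<^sub>m a) Y *\<^sub>v z)) $ (i * b + t))
        = (1\<^sub>m b + e \<cdot>\<^sub>m Y) *\<^sub>v vec b (\<lambda>t. z $ (i * b + t))" if i: "i < a" for i
      using Y K z i
      by (intro eq_vecI) (auto simp: one_plus_smult_mult_vec[OF Y] one_kronecker_mult_vec_index[OF Y z i]
          row_major_index_less simp del: index_mult_mat_vec)
    then show "lp_norm p (z + e \<cdot>\<^sub>v (kronecker (1\<^sub>m a) Y *\<^sub>v z))
        \<le> induced_norm (lp_norm p) b (1\<^sub>m b + e \<cdot>\<^sub>m Y) * lp_norm p z"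
      using Y K z by (intro lp_norm_rowwise_le[OF p b _ z]) auto
  qed
qed (use a b Y kronecker_carrier[OF one_carrier_mat Y] in auto)

lemma kron_sum_eq:
  assumes "X \<in> carrier_mat a a" "Y \<in> carrier_mat b b"
  shows "kron_sum X Y = kronecker X (1\<^sub>m b) + kronecker (1\<^sub>m a) Y"
  using assms by (simp add: kron_sum_def)

lemma matrix_measure_kron_sum_le:
  assumes p: "1 \<le> p" and a: "0 < a" and b: "0 < b"
    and X: "X \<in> carrier_mat a a" and Y: "Y \<in> carrier_mat b b"
  shows "matrix_measure (lp_norm p) (a * b) (kron_sum X Y)
    \<le> matrix_measure (lp_norm p) a X + matrix_measure (lp_norm p) b Y"
proof -
  interpret vec_norm "a * b" "lp_norm p" using vec_norm_lp_norm[OF p] a b by simp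
  have "matrix_measure (lp_norm p) (a * b) (kron_sum X Y)
      \<le> matrix_measure (lp_norm p) (a * b) (kronecker X (1\<^sub>m b))
        + matrix_measure (lp_norm p) (a * b) (kronecker (1\<^sub>m a) Y)"
    unfolding kron_sum_eq[OF X Y]
    by (intro matrix_measure_add_le kronecker_carrier[of _ a a _ b b, simplified] X Y one_carrier_mat)
  also have "\<dots> \<le> matrix_measure (lp_norm p) a X + matrix_measure (lp_norm p) b Y"
    by (intro add_mono matrix_measure_kronecker_one_le matrix_measure_one_kronecker_le p a b X Y)
  finally show ?thesis .
qed

lemma kron_vec_add_smult:
  assumes "u \<in> carrier_vec a" "u' \<in> carrier_vec a" "v \<in> carrier_vec b" "v' \<in> carrier_vec b"
  shows "kron_vec (u + e \<cdot>\<^sub>v u') (v + e \<cdot>\<^sub>v v')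
    = kron_vec u v + e \<cdot>\<^sub>v (kron_vec u' v + kron_vec u v') + (e * e) \<cdot>\<^sub>v kron_vec u' v'"
proof (rule eq_vec_row_major[of _ a b])
  fix i t assume it: "i < a" "t < b"
  have idx: "kron_vec x y $ (i * b + t) = x $ i * y $ t"
    if "x \<in> carrier_vec a" "y \<in> carrier_vec b" for x y
    using that it by (rule index_kron_vec)
  have "kron_vec (u + e \<cdot>\<^sub>v u') (v + e \<cdot>\<^sub>v v') $ (i * b + t) = (u $ i + e * u' $ i) * (v $ t + e * v' $ t)"
    using assms it by (simp add: idx)
  moreover have "(kron_vec u v + e \<cdot>\<^sub>v (kron_vec u' v + kron_vec u v') + (e * e) \<cdot>\<^sub>v kron_vec u' v') $ (i * b + t)
      = u $ i * v $ t + e * (u' $ i * v $ t + u $ i * v' $ t) + (e * e) * (u' $ i * v' $ t)"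
    using assms row_major_index_less[OF it] by (simp add: idx)
  ultimately show "kron_vec (u + e \<cdot>\<^sub>v u') (v + e \<cdot>\<^sub>v v') $ (i * b + t)
      = (kron_vec u v + e \<cdot>\<^sub>v (kron_vec u' v + kron_vec u v') + (e * e) \<cdot>\<^sub>v kron_vec u' v') $ (i * b + t)"
    by (simp add: algebra_simps)
qed (use assms in simp_all)

lemma kron_sum_mult_kron_vec:
  assumes X: "X \<in> carrier_mat a a" and Y: "Y \<in> carrier_mat b b"
    and u: "u \<in> carrier_vec a" and v: "v \<in> carrier_vec b"
  shows "kron_sum X Y *\<^sub>v kron_vec u v = kron_vec (X *\<^sub>v u) v + kron_vec u (Y *\<^sub>v v)"
  using kronecker_mult_kron_vec[OF X one_carrier_mat u v] kronecker_mult_kron_vec[OF one_carrier_mat Y u v]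
    kronecker_carrier[OF X one_carrier_mat] kronecker_carrier[OF one_carrier_mat Y] kron_vec_carrier[OF u v]
    u v
  by (simp add: kron_sum_eq[OF X Y] add_mult_distrib_mat_vec[of _ "a * b" "a * b"])

lemma induced_norm_one_plus_kron_sum_ge:
  assumes p: "1 \<le> p" and a: "0 < a" and b: "0 < b"
    and X: "X \<in> carrier_mat a a" and Y: "Y \<in> carrier_mat b b"
  shows "induced_norm (lp_norm p) a (1\<^sub>m a + e \<cdot>\<^sub>m X) * induced_norm (lp_norm p) b (1\<^sub>m b + e \<cdot>\<^sub>m Y)
    \<le> induced_norm (lp_norm p) (a * b) (1\<^sub>m (a * b) + e \<cdot>\<^sub>m kron_sum X Y)
      + e * e * (induced_norm (lp_norm p) a X * induced_norm (lp_norm p) b Y)"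
    (is "_ \<le> ?T")
proof (rule induced_norm_mult_le[OF vec_norm_lp_norm[OF p a] vec_norm_lp_norm[OF p b]])
  interpret A: vec_norm a "lp_norm p" by (rule vec_norm_lp_norm[OF p a])
  interpret B: vec_norm b "lp_norm p" by (rule vec_norm_lp_norm[OF p b])
  interpret K: vec_norm "a * b" "lp_norm p" using vec_norm_lp_norm[OF p] a b by simp
  have KS: "kron_sum X Y \<in> carrier_mat (a * b) (a * b)" by (rule kron_sum_carrier[OF X Y])
  show "0 \<le> ?T"
    using K.induced_norm_nonneg A.induced_norm_nonneg[OF X] B.induced_norm_nonneg[OF Y] KS by simp
  fix u v :: "real vec" assume u: "u \<in> carrier_vec a" and v: "v \<in> carrier_vec b"
  let ?w = "kron_vec u v"
  have w: "?w \<in> carrier_vec (a * b)" by (rule kron_vec_carrier[OF u v])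
  have Xu: "X *\<^sub>v u \<in> carrier_vec a" and Yv: "Y *\<^sub>v v \<in> carrier_vec b" using X Y u v by auto
  have "lp_norm p ((1\<^sub>m a + e \<cdot>\<^sub>m X) *\<^sub>v u) * lp_norm p ((1\<^sub>m b + e \<cdot>\<^sub>m Y) *\<^sub>v v)
      = lp_norm p (kron_vec (u + e \<cdot>\<^sub>v (X *\<^sub>v u)) (v + e \<cdot>\<^sub>v (Y *\<^sub>v v)))"
    using X Y u v by (simp add: lp_norm_kron_vec[OF p] one_plus_smult_mult_vec)
  also have "\<dots> = lp_norm p ((?w + e \<cdot>\<^sub>v (kron_sum X Y *\<^sub>v ?w)) + (e * e) \<cdot>\<^sub>v kron_vec (X *\<^sub>v u) (Y *\<^sub>v v))"
    by (simp add: kron_vec_add_smult[OF u Xu v Yv] kron_sum_mult_kron_vec[OF X Y u v])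
  also have "\<dots> \<le> lp_norm p (?w + e \<cdot>\<^sub>v (kron_sum X Y *\<^sub>v ?w))
      + e * e * (lp_norm p (X *\<^sub>v u) * lp_norm p (Y *\<^sub>v v))"
    using K.triangle[of "?w + e \<cdot>\<^sub>v (kron_sum X Y *\<^sub>v ?w)" "(e * e) \<cdot>\<^sub>v kron_vec (X *\<^sub>v u) (Y *\<^sub>v v)"]
      w KS kron_vec_carrier[OF Xu Yv]
    by (simp add: lp_norm_smult[OF p] lp_norm_kron_vec[OF p])
  also have "\<dots> \<le> induced_norm (lp_norm p) (a * b) (1\<^sub>m (a * b) + e \<cdot>\<^sub>m kron_sum X Y) * lp_norm p ?w
      + e * e * ((induced_norm (lp_norm p) a X * lp_norm p u) * (induced_norm (lp_norm p) b Y * lp_norm p v))"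
    using K.le_induced_norm_one_plus[OF KS w] A.mult_vec_le_induced_norm[OF X u]
      B.mult_vec_le_induced_norm[OF Y v] lp_norm_nonneg[OF p] A.induced_norm_nonneg[OF X]
    by (intro add_mono mult_left_mono mult_mono) auto
  also have "\<dots> = ?T * (lp_norm p u * lp_norm p v)"
    by (simp add: lp_norm_kron_vec[OF p] algebra_simps)
  finally show "lp_norm p ((1\<^sub>m a + e \<cdot>\<^sub>m X) *\<^sub>v u) * lp_norm p ((1\<^sub>m b + e \<cdot>\<^sub>m Y) *\<^sub>v v)
      \<le> ?T * (lp_norm p u * lp_norm p v)" .
qed (use X Y in auto)

theorem matrix_measure_kron_sum:
  assumes p: "1 \<le> p" and a: "0 < a" and b: "0 < b"
    and X: "X \<in> carrier_mat a a" and Y: "Y \<in> carrier_mat b b"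
  shows "matrix_measure (lp_norm p) (a * b) (kron_sum X Y)
    = matrix_measure (lp_norm p) a X + matrix_measure (lp_norm p) b Y"
proof (rule antisym[OF matrix_measure_kron_sum_le[OF assms]])
  interpret A: vec_norm a "lp_norm p" by (rule vec_norm_lp_norm[OF p a])
  interpret B: vec_norm b "lp_norm p" by (rule vec_norm_lp_norm[OF p b])
  interpret K: vec_norm "a * b" "lp_norm p" using vec_norm_lp_norm[OF p] a b by simp
  define c where "c = induced_norm (lp_norm p) a X * induced_norm (lp_norm p) b Y"
  let ?fB = "\<lambda>e. induced_norm (lp_norm p) b (1\<^sub>m b + e \<cdot>\<^sub>m Y)"
  have "A.measure_quotient X e * ?fB e + B.measure_quotient Y e \<le> K.measure_quotient (kron_sum X Y) e + e * c"
    if e: "0 < e" for e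
    using divide_right_mono[OF induced_norm_one_plus_kron_sum_ge[OF assms, of e], of e] e
    by (simp add: c_def field_simps)
  then have "eventually (\<lambda>e. A.measure_quotient X e * ?fB e + B.measure_quotient Y e
      \<le> K.measure_quotient (kron_sum X Y) e + e * c) (at_right 0)"
    unfolding eventually_at_right_field by (intro exI[of _ 1]) auto
  moreover have "((\<lambda>e. A.measure_quotient X e * ?fB e + B.measure_quotient Y e)
      \<longlongrightarrow> matrix_measure (lp_norm p) a X * 1 + matrix_measure (lp_norm p) b Y) (at_right 0)"
    by (intro tendsto_intros A.tendsto_matrix_measure B.tendsto_matrix_measure
        B.tendsto_induced_norm_one_plus X Y)
  moreover have "((\<lambda>e. K.measure_quotient (kron_sum X Y) e + e * c)
      \<longlongrightarrow> matrix_measure (lp_norm p) (a * b) (kron_sum X Y) + 0 * c) (at_right 0)"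
    by (intro tendsto_intros K.tendsto_matrix_measure kron_sum_carrier X Y)
  ultimately show "matrix_measure (lp_norm p) a X + matrix_measure (lp_norm p) b Y
      \<le> matrix_measure (lp_norm p) (a * b) (kron_sum X Y)"
    using tendsto_le[OF trivial_limit_at_right_real] by fastforce
qed

section \<open>Block-diagonal matrices and block norms\<close>

definition block_offset :: "(nat \<Rightarrow> nat) \<Rightarrow> nat \<Rightarrow> nat \<Rightarrow> nat" where
  "block_offset d lo i = (\<Sum>j\<in>{lo..<i}. d j)"

lemma vec_block_eq: "vec_block d lo i x = vec (d i) (\<lambda>t. x $ (block_offset d lo i + t))"
  unfolding vec_block_def block_offset_def ..

lemma vec_block_carrier [simp]: "vec_block d lo i x \<in> carrier_vec (d i)"
  by (simp add: vec_block_eq)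

lemma block_offset_self [simp]: "block_offset d lo lo = 0"
  by (simp add: block_offset_def)

lemma block_offset_Suc: "lo \<le> i \<Longrightarrow> block_offset d lo (Suc i) = block_offset d lo i + d i"
  by (simp add: block_offset_def)

lemma block_offset_mono: "i \<le> j \<Longrightarrow> block_offset d lo i \<le> block_offset d lo j"
  unfolding block_offset_def by (intro sum_mono2) auto

lemma block_offset_shift: "lo < i \<Longrightarrow> block_offset d lo i = d lo + block_offset d (Suc lo) i"
  by (simp add: block_offset_def sum.atLeast_Suc_lessThan)

lemma block_offset_add_le:
  "i \<in> {lo..<lo + n} \<Longrightarrow> block_offset d lo i + d i \<le> block_offset d lo (lo + n)"
  using block_offset_Suc[of lo i d] block_offset_mono[of "Suc i" "lo + n" d lo] by simp

lemma vec_block_append_first: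
  assumes "dim_vec u = d lo"
  shows "vec_block d lo lo (u @\<^sub>v w) = u"
  using assms by (intro eq_vecI) (auto simp: vec_block_eq)

lemma vec_block_append_rest:
  assumes "dim_vec u = d lo" "lo < i" "block_offset d (Suc lo) i + d i \<le> dim_vec w"
  shows "vec_block d lo i (u @\<^sub>v w) = vec_block d (Suc lo) i w"
  using assms by (intro eq_vecI) (auto simp: vec_block_eq block_offset_shift)

lemma vec_block_add_smult:
  assumes "x \<in> carrier_vec r" "w \<in> carrier_vec r" "block_offset d lo i + d i \<le> r"
  shows "vec_block d lo i (x + c \<cdot>\<^sub>v w) = vec_block d lo i x + c \<cdot>\<^sub>v vec_block d lo i w"
  using assms by (intro eq_vecI) (auto simp: vec_block_eq)

lemma diag_block_mat_carrier:
  assumes "\<And>i. i \<in> {lo..<lo + n} \<Longrightarrow> F i \<in> carrier_mat (d i) (d i)"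
  shows "diag_block_mat (map F [lo..<lo + n])
    \<in> carrier_mat (block_offset d lo (lo + n)) (block_offset d lo (lo + n))"
proof -
  have "sum_list (map dim_row (map F [lo..<lo + n])) = block_offset d lo (lo + n)"
    "sum_list (map dim_col (map F [lo..<lo + n])) = block_offset d lo (lo + n)"
    using assms[THEN carrier_matD(1)] assms[THEN carrier_matD(2)]
    by (auto simp: block_offset_def sum_set_upt_conv_sum_list_nat[symmetric] intro!: sum.cong)
  then show ?thesis by (intro carrier_matI) (simp_all only: dim_diag_block_mat map_map)
qed

lemma vec_block_diag_block_mat_mult:
  assumes F: "\<And>i. i \<in> {lo..<lo + n} \<Longrightarrow> F i \<in> carrier_mat (d i) (d i)"
    and y: "y \<in> carrier_vec (block_offset d lo (lo + n))" and i: "i \<in> {lo..<lo + n}"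
  shows "vec_block d lo i (diag_block_mat (map F [lo..<lo + n]) *\<^sub>v y) = F i *\<^sub>v vec_block d lo i y"
  using assms
proof (induction n arbitrary: lo y)
  case (Suc n)
  let ?D = "diag_block_mat (map F [Suc lo..<Suc lo + n])"
  let ?r = "block_offset d (Suc lo) (Suc lo + n)"
  have F': "F i \<in> carrier_mat (d i) (d i)" if "i \<in> {Suc lo..<Suc lo + n}" for i
    using Suc.prems(1) that by auto
  have D: "?D \<in> carrier_mat ?r ?r" by (rule diag_block_mat_carrier[OF F'])
  have Flo: "F lo \<in> carrier_mat (d lo) (d lo)" using Suc.prems(1) by auto
  have "y \<in> carrier_vec (d lo + ?r)"
    using Suc.prems(2) block_offset_shift[of lo "lo + Suc n" d] by simp
  then obtain y1 y2 where y: "y = y1 @\<^sub>v y2" and y1: "y1 \<in> carrier_vec (d lo)" and y2: "y2 \<in> carrier_vec ?r"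
    by (metis carrier_vecD vec_first_carrier vec_last_carrier vec_first_last_append)
  have Dy: "diag_block_mat (map F [lo..<lo + Suc n]) *\<^sub>v y = (F lo *\<^sub>v y1) @\<^sub>v (?D *\<^sub>v y2)"
  proof -
    have "[lo..<lo + Suc n] = lo # [Suc lo..<Suc lo + n]" by (simp add: upt_conv_Cons)
    then have "diag_block_mat (map F [lo..<lo + Suc n]) = four_block_mat (F lo) (0\<^sub>m (d lo) ?r) (0\<^sub>m ?r (d lo)) ?D"
      using Flo D by (simp add: Let_def)
    then show ?thesis unfolding y using mult_mat_vec_split[OF Flo D y1 y2] by simp
  qed
  show ?case
  proof (cases "i = lo")
    case True
    then show ?thesis unfolding Dy using Flo y1 by (simp add: y vec_block_append_first)
  next
    case False
    then have i: "lo < i" "i \<in> {Suc lo..<Suc lo + n}" using Suc.prems(3) by auto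
    have bound: "block_offset d (Suc lo) i + d i \<le> ?r" by (rule block_offset_add_le[OF i(2)])
    have "vec_block d lo i (diag_block_mat (map F [lo..<lo + Suc n]) *\<^sub>v y) = vec_block d (Suc lo) i (?D *\<^sub>v y2)"
      unfolding Dy using Flo D y2 bound by (simp add: vec_block_append_rest[OF _ i(1)])
    also have "\<dots> = F i *\<^sub>v vec_block d (Suc lo) i y2" by (rule Suc.IH[OF F' y2 i(2)])
    also have "vec_block d (Suc lo) i y2 = vec_block d lo i y"
      using y1 y2 bound by (simp add: y vec_block_append_rest[OF _ i(1)])
    finally show ?thesis .
  qed
qed simp

lemma tendsto_Max:
  fixes f :: "'i \<Rightarrow> 'x \<Rightarrow> real"
  assumes "finite S" "S \<noteq> {}" "\<And>i. i \<in> S \<Longrightarrow> (f i \<longlongrightarrow> l i) F"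
  shows "((\<lambda>x. Max ((\<lambda>i. f i x) ` S)) \<longlongrightarrow> Max (l ` S)) F"
  using assms
proof (induction S rule: finite_ne_induct)
  case (insert i S)
  then show ?case by (simp add: tendsto_max)
qed simp

text \<open>The norm \<open>|x|\<close> of the statement, for blocks of sizes \<open>d lo, ..., d (lo + n - 1)\<close> normed by
  \<open>N lo, ..., N (lo + n - 1)\<close> and combined by the outer norm \<open>N0\<close>.\<close>

definition block_norm ::
    "(real vec \<Rightarrow> real) \<Rightarrow> (nat \<Rightarrow> real vec \<Rightarrow> real) \<Rightarrow> (nat \<Rightarrow> nat) \<Rightarrow> nat \<Rightarrow> nat \<Rightarrow> real vec \<Rightarrow> real"
  where "block_norm N0 N d lo n y = N0 (vec n (\<lambda>j. N (lo + j) (vec_block d lo (lo + j) y)))"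

locale block_norms =
  fixes N0 :: "real vec \<Rightarrow> real" and N :: "nat \<Rightarrow> real vec \<Rightarrow> real" and d :: "nat \<Rightarrow> nat"
    and lo n :: nat
  assumes outer: "monotonic_norm n N0"
    and blocks_nonempty: "0 < n"
    and inner: "\<And>i. i \<in> {lo..<lo + n} \<Longrightarrow> vec_norm (d i) (N i)"
begin

abbreviation "I \<equiv> {lo..<lo + n}"
abbreviation "r \<equiv> block_offset d lo (lo + n)"
abbreviation "NB \<equiv> block_norm N0 N d lo n"

lemma outer_nonneg: "0 \<le> N0 (vec n f)"
  using outer by (simp add: monotonic_norm_def is_vec_norm_def)

lemma outer_smult: "N0 (c \<cdot>\<^sub>v vec n f) = \<bar>c\<bar> * N0 (vec n f)"
  using outer by (simp add: monotonic_norm_def is_vec_norm_def)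

lemma outer_mono: "(\<And>j. j < n \<Longrightarrow> \<bar>f j\<bar> \<le> \<bar>g j\<bar>) \<Longrightarrow> N0 (vec n f) \<le> N0 (vec n g)"
  using outer by (simp add: monotonic_norm_def)

lemma outer_unit_vec_pos:
  assumes "i \<in> I"
  shows "0 < N0 (unit_vec n (i - lo))"
proof -
  have "unit_vec n (i - lo) \<noteq> (0\<^sub>v n :: real vec)" using assms by (intro unit_vec_nonzero) auto
  then show ?thesis using outer by (auto simp: monotonic_norm_def is_vec_norm_def order_less_le)
qed

lemma block_norm_nonneg: "0 \<le> NB y"
  by (simp add: block_norm_def outer_nonneg)

lemma block_offset_le: "i \<in> I \<Longrightarrow> block_offset d lo i + d i \<le> r"
  by (rule block_offset_add_le)

lemma block_embedding:
  assumes i: "i \<in> I" and z: "z \<in> carrier_vec (d i)"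
  obtains y where "y \<in> carrier_vec r" "vec_block d lo i y = z"
    "\<And>j. j \<in> I \<Longrightarrow> j \<noteq> i \<Longrightarrow> vec_block d lo j y = 0\<^sub>v (d j)"
proof
  let ?o = "block_offset d lo"
  define y where "y = vec r (\<lambda>t. if ?o i \<le> t \<and> t < ?o i + d i then z $ (t - ?o i) else 0)"
  show "y \<in> carrier_vec r" by (simp add: y_def)
  show "vec_block d lo i y = z"
    using z block_offset_le[OF i] by (intro eq_vecI) (auto simp: vec_block_eq y_def)
  fix j assume j: "j \<in> I" "j \<noteq> i"
  have disjoint: "\<not> (?o i \<le> ?o j + t \<and> ?o j + t < ?o i + d i)" if "t < d j" for t
  proof (cases "j < i")
    case True
    then have "?o j + t < ?o i"
      using that j block_offset_Suc[of lo j d] block_offset_mono[of "Suc j" i d lo] by auto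
    then show ?thesis by simp
  next
    case False
    then have "?o i + d i \<le> ?o j"
      using i j block_offset_Suc[of lo i d] block_offset_mono[of "Suc i" j d lo] by auto
    then show ?thesis by simp
  qed
  show "vec_block d lo j y = 0\<^sub>v (d j)"
    using block_offset_le[OF j(1)] disjoint by (intro eq_vecI) (auto simp: vec_block_eq y_def)
qed

lemma block_norm_single_block:
  assumes i: "i \<in> I"
    and blocks: "\<And>j. j \<in> I \<Longrightarrow> N j (vec_block d lo j y) = (if j = i then c else 0)"
  shows "NB y = \<bar>c\<bar> * N0 (unit_vec n (i - lo))"
proof -
  have "vec n (\<lambda>j. N (lo + j) (vec_block d lo (lo + j) y)) = c \<cdot>\<^sub>v unit_vec n (i - lo)"
    using i blocks by (intro eq_vecI) auto
  then show ?thesis by (simp add: block_norm_def outer_smult[of c "\<lambda>j. if j = i - lo then 1 else 0", folded unit_vec_def])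
qed

context
  fixes M :: "real mat" and G :: "nat \<Rightarrow> real mat"
  assumes M: "M \<in> carrier_mat r r" and G: "\<And>i. i \<in> I \<Longrightarrow> G i \<in> carrier_mat (d i) (d i)"
    and blockwise: "\<And>i y. i \<in> I \<Longrightarrow> y \<in> carrier_vec r \<Longrightarrow>
      vec_block d lo i (M *\<^sub>v y) = G i *\<^sub>v vec_block d lo i y"
begin

lemma induced_norm_block_le_Max:
  "i \<in> I \<Longrightarrow> induced_norm (N i) (d i) (G i) \<le> Max ((\<lambda>i. induced_norm (N i) (d i) (G i)) ` I)"
  by (intro Max_ge) auto

lemma Max_induced_norm_nonneg: "0 \<le> Max ((\<lambda>i. induced_norm (N i) (d i) (G i)) ` I)"
proof -
  have lo: "lo \<in> I" using blocks_nonempty by simp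
  show ?thesis
    using vec_norm.induced_norm_nonneg[OF inner[OF lo] G[OF lo]] induced_norm_block_le_Max[OF lo]
    by linarith
qed

lemma block_norm_mult_le:
  assumes y: "y \<in> carrier_vec r"
  shows "NB (M *\<^sub>v y) \<le> Max ((\<lambda>i. induced_norm (N i) (d i) (G i)) ` I) * NB y"
proof -
  let ?m = "Max ((\<lambda>i. induced_norm (N i) (d i) (G i)) ` I)"
  have "N (lo + j) (vec_block d lo (lo + j) (M *\<^sub>v y))
      \<le> ?m * N (lo + j) (vec_block d lo (lo + j) y)" if "j < n" for j
  proof -
    have i: "lo + j \<in> I" using that by simp
    interpret vec_norm "d (lo + j)" "N (lo + j)" by (rule inner[OF i])
    show ?thesis
      unfolding blockwise[OF i y]
      using mult_vec_le_induced_norm[OF G[OF i] vec_block_carrier[of d lo "lo + j" y]]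
        induced_norm_block_le_Max[OF i] nonneg[OF vec_block_carrier[of d lo "lo + j" y]]
      by (meson mult_right_mono order_trans)
  qed
  then have "NB (M *\<^sub>v y) \<le> N0 (?m \<cdot>\<^sub>v vec n (\<lambda>j. N (lo + j) (vec_block d lo (lo + j) y)))"
    unfolding block_norm_def using Max_induced_norm_nonneg
    by (simp add: smult_vec_def outer_mono vec_norm.nonneg[OF inner] abs_mult)
  then show ?thesis using Max_induced_norm_nonneg by (simp add: outer_smult block_norm_def)
qed

lemma block_ratio_le_Max:
  assumes "y \<in> carrier_vec r"
  shows "NB (M *\<^sub>v y) / NB y \<le> Max ((\<lambda>i. induced_norm (N i) (d i) (G i)) ` I)"
  using block_norm_mult_le[OF assms] block_norm_nonneg[of y] Max_induced_norm_nonneg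
  by (cases "NB y = 0") (simp_all add: divide_le_eq)

lemma induced_norm_blockwise_le: "induced_norm NB r M \<le> Max ((\<lambda>i. induced_norm (N i) (d i) (G i)) ` I)"
proof -
  have lo: "lo \<in> I" using blocks_nonempty by simp
  have "0 < r" using vec_norm.dim_pos[OF inner[OF lo]] block_offset_le[OF lo] by linarith
  then have "unit_vec r 0 \<noteq> (0\<^sub>v r :: real vec)" by simp
  then have "{NB (M *\<^sub>v y) / NB y | y. y \<in> carrier_vec r \<and> y \<noteq> 0\<^sub>v r} \<noteq> {}"
    using unit_vec_carrier by blast
  then show ?thesis
    unfolding induced_norm_def[of NB] using block_ratio_le_Max by (intro cSup_least) auto
qed

lemma induced_norm_block_le:
  assumes i: "i \<in> I"
  shows "induced_norm (N i) (d i) (G i) \<le> induced_norm NB r M"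
proof -
  interpret vec_norm "d i" "N i" by (rule inner[OF i])
  show ?thesis
  proof (rule induced_norm_le)
    fix z :: "real vec" assume z: "z \<in> carrier_vec (d i)"
    show "N i (G i *\<^sub>v z) \<le> induced_norm NB r M * N i z"
    proof (cases "z = 0\<^sub>v (d i)")
      case True
      then show ?thesis using G[OF i] by simp
    next
      case False
      \<comment> \<open>with \<open>z\<close> as its only nonzero block, \<open>NB\<close> is \<open>N i\<close> times a positive constant\<close>
      obtain y where y: "y \<in> carrier_vec r" "vec_block d lo i y = z"
        and zero: "\<And>j. j \<in> I \<Longrightarrow> j \<noteq> i \<Longrightarrow> vec_block d lo j y = 0\<^sub>v (d j)"
        using block_embedding[OF i z] by blast
      let ?e = "N0 (unit_vec n (i - lo))"
      have "G j *\<^sub>v 0\<^sub>v (d j) = 0\<^sub>v (d j)" if "j \<in> I" for j using G[OF that] by simp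
      have "NB y = N i z * ?e"
        using y zero nonneg[OF z] vec_norm.zero[OF inner]
        by (subst block_norm_single_block[OF i, of _ "N i z"]) auto
      moreover have "NB (M *\<^sub>v y) = N i (G i *\<^sub>v z) * ?e"
        using y zero nonneg[OF mult_mat_vec_carrier[OF G[OF i] z]] vec_norm.zero[OF inner]
          \<open>\<And>j. j \<in> I \<Longrightarrow> G j *\<^sub>v 0\<^sub>v (d j) = 0\<^sub>v (d j)\<close>
        by (subst block_norm_single_block[OF i, of _ "N i (G i *\<^sub>v z)"]) (auto simp: blockwise)
      moreover have "y \<noteq> 0\<^sub>v r"
        using y False block_offset_le[OF i] by (auto simp: vec_block_eq)
      then have "NB (M *\<^sub>v y) / NB y \<le> induced_norm NB r M"
        unfolding induced_norm_def[of NB] using y block_ratio_le_Max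
        by (intro cSup_upper) (auto intro!: bdd_aboveI)
      ultimately show ?thesis
        using pos[OF z False] outer_unit_vec_pos[OF i] by (simp add: divide_le_eq)
    qed
  qed
qed

lemma induced_norm_blockwise: "induced_norm NB r M = Max ((\<lambda>i. induced_norm (N i) (d i) (G i)) ` I)"
  using induced_norm_blockwise_le induced_norm_block_le blocks_nonempty
  by (intro antisym) (auto intro: Max.boundedI)

end

lemma matrix_measure_diag_block_mat:
  assumes F: "\<And>i. i \<in> I \<Longrightarrow> F i \<in> carrier_mat (d i) (d i)"
  shows "matrix_measure NB r (diag_block_mat (map F [lo..<lo + n]))
    = Max ((\<lambda>i. matrix_measure (N i) (d i) (F i)) ` I)"
proof -
  let ?D = "diag_block_mat (map F [lo..<lo + n])"
  have D: "?D \<in> carrier_mat r r" by (rule diag_block_mat_carrier[of lo n F d]) (rule F)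
  have induced: "induced_norm NB r (1\<^sub>m r + e \<cdot>\<^sub>m ?D)
      = Max ((\<lambda>i. induced_norm (N i) (d i) (1\<^sub>m (d i) + e \<cdot>\<^sub>m F i)) ` I)" for e
  proof (rule induced_norm_blockwise)
    fix i and y :: "real vec" assume i: "i \<in> I" and y: "y \<in> carrier_vec r"
    have "vec_block d lo i ((1\<^sub>m r + e \<cdot>\<^sub>m ?D) *\<^sub>v y) = vec_block d lo i y + e \<cdot>\<^sub>v vec_block d lo i (?D *\<^sub>v y)"
      using D y block_offset_le[OF i] by (simp add: one_plus_smult_mult_vec vec_block_add_smult)
    also have "\<dots> = (1\<^sub>m (d i) + e \<cdot>\<^sub>m F i) *\<^sub>v vec_block d lo i y"
      using vec_block_diag_block_mat_mult[of lo n F d, OF F y i]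
        one_plus_smult_mult_vec[OF F[OF i] vec_block_carrier[of d lo i y]] by simp
    finally show "vec_block d lo i ((1\<^sub>m r + e \<cdot>\<^sub>m ?D) *\<^sub>v y) = (1\<^sub>m (d i) + e \<cdot>\<^sub>m F i) *\<^sub>v vec_block d lo i y" .
  qed (use D F in auto)
  have "((\<lambda>e. Max ((\<lambda>i. vec_norm.measure_quotient (d i) (N i) (F i) e) ` I))
      \<longlongrightarrow> Max ((\<lambda>i. matrix_measure (N i) (d i) (F i)) ` I)) (at_right 0)"
    using blocks_nonempty F by (intro tendsto_Max vec_norm.tendsto_matrix_measure[OF inner]) auto
  moreover have "eventually (\<lambda>e. Max ((\<lambda>i. vec_norm.measure_quotient (d i) (N i) (F i) e) ` I)
      = (induced_norm NB r (1\<^sub>m r + e \<cdot>\<^sub>m ?D) - 1) / e) (at_right 0)"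
    unfolding eventually_at_right_field
  proof (intro exI[of _ 1] conjI allI impI)
    fix e :: real assume "0 < e" "e < 1"
    then have "mono (\<lambda>x::real. (x - 1) / e)" by (intro monoI) (simp add: divide_right_mono)
    then show "Max ((\<lambda>i. vec_norm.measure_quotient (d i) (N i) (F i) e) ` I)
        = (induced_norm NB r (1\<^sub>m r + e \<cdot>\<^sub>m ?D) - 1) / e"
      unfolding induced using mono_Max_commute[of "\<lambda>x. (x - 1) / e"] blocks_nonempty
      by (simp add: image_image)
  qed simp
  ultimately have "((\<lambda>e. (induced_norm NB r (1\<^sub>m r + e \<cdot>\<^sub>m ?D) - 1) / e)
      \<longlongrightarrow> Max ((\<lambda>i. matrix_measure (N i) (d i) (F i)) ` I)) (at_right 0)"
    by (rule Lim_transform_eventually)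
  then show ?thesis unfolding matrix_measure_def by (intro tendsto_Lim) auto
qed

end

section \<open>Compound matrices and permutation similarity\<close>

lemma length_ksubs_from: "length (ksubs_from k lo hi) = (hi - lo) choose k"
proof (induction k arbitrary: lo)
  case (Suc k)
  have sum_choose: "(\<Sum>t<N. t choose k) = N choose Suc k" for N
    by (induction N) auto
  have "length (ksubs_from (Suc k) lo hi) = (\<Sum>a\<in>{lo..<hi}. (hi - Suc a) choose k)"
    by (simp add: length_concat o_def Suc.IH sum_set_upt_conv_sum_list_nat[symmetric])
  also have "\<dots> = (\<Sum>t<hi - lo. t choose k)"
    by (rule sum.reindex_bij_witness[of _ "\<lambda>t. hi - Suc t" "\<lambda>a. hi - Suc a"]) auto
  finally show ?case by (simp add: sum_choose)
qed simp

lemma add_compound_carrier: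
  assumes "A \<in> carrier_mat n n"
  shows "add_compound j A \<in> carrier_mat (n choose j) (n choose j)"
  using assms by (simp add: add_compound_def ksubs_def length_ksubs_from)

lemma vandermonde_restricted:
  assumes "k \<le> n + m"
  shows "(\<Sum>i\<in>{k - n..min m k}. (n choose (k - i)) * (m choose i)) = (n + m) choose k"
proof -
  have "(\<Sum>i\<in>{k - n..min m k}. (n choose (k - i)) * (m choose i))
      = (\<Sum>i\<in>{k - n..min m k}. (m choose i) * (n choose (k - i)))"
    by (simp add: mult.commute)
  also have "\<dots> = (\<Sum>i\<le>k. (m choose i) * (n choose (k - i)))"
    by (rule sum.mono_neutral_left) auto
  also have "\<dots> = (m + n) choose k" by (rule vandermonde)
  finally show ?thesis by (simp add: add.commute)
qed

lemma mat_inv_eqI: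
  assumes P: "P \<in> carrier_mat r r" and Q: "Q \<in> carrier_mat r r"
    and PQ: "P * Q = 1\<^sub>m r" and QP: "Q * P = 1\<^sub>m r"
  shows "mat_inv P = Q"
proof -
  have "P \<in> Units (ring_mat TYPE(real) r ())"
    using P Q PQ QP by (auto simp: Units_def ring_mat_simps)
  then obtain Q' where Q': "mat_inverse P = Some Q'"
    using mat_inverse(1)[OF P, where b = "()"] by (cases "mat_inverse P") auto
  then have "Q' * P = 1\<^sub>m r" "Q' \<in> carrier_mat r r" using mat_inverse(2)[OF P] by auto
  then have "Q' = Q" using P Q PQ by (metis assoc_mult_mat left_mult_one_mat right_mult_one_mat)
  then show ?thesis using Q' by (simp add: mat_inv_def)
qed

lemma permutation_mat_orthogonal:
  assumes "permutation_mat r P"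
  shows "P * transpose_mat P = 1\<^sub>m r" "transpose_mat P * P = 1\<^sub>m r"
proof -
  obtain \<sigma> where \<sigma>: "\<sigma> permutes {..<r}" and P: "P = mat r r (\<lambda>(i, j). if i = \<sigma> j then 1 else 0)"
    using assms unfolding permutation_mat_def by blast
  have "(\<Sum>l<r. (if i = \<sigma> l then 1 else 0) * (if j = \<sigma> l then 1 else 0)) = (if i = j then 1 else 0 :: real)"
    if "i < r" for i j
  proof -
    let ?g = "\<lambda>l. (if i = l then 1 else 0) * (if j = l then 1 else (0::real))"
    have "(\<Sum>l<r. (if i = \<sigma> l then 1 else 0) * (if j = \<sigma> l then 1 else 0)) = (\<Sum>l<r. ?g l)"
      using sum.permute[OF \<sigma>, of ?g] by (simp add: o_def)
    also have "\<dots> = (if i = j then 1 else 0)"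
      using that by (simp add: if_distrib[of "\<lambda>c. c * _"] sum.delta cong: if_cong)
    finally show ?thesis .
  qed
  then show "P * transpose_mat P = 1\<^sub>m r"
    by (intro eq_matI) (auto simp: P scalar_prod_def lessThan_atLeast0)
  have "\<sigma> i < r" if "i < r" for i using permutes_in_image[OF \<sigma>] that by simp
  then have "(\<Sum>l<r. (if l = \<sigma> i then 1 else 0) * (if l = \<sigma> j then 1 else 0)) = (if i = j then 1 else 0 :: real)"
    if "i < r" "j < r" for i j
    using that permutes_inj[OF \<sigma>]
    by (simp add: if_distrib[of "\<lambda>c. c * _"] sum.delta' inj_eq cong: if_cong)
  then show "transpose_mat P * P = 1\<^sub>m r"
    by (intro eq_matI) (auto simp: P scalar_prod_def lessThan_atLeast0)
qed

lemma mat_inv_permutation_mat: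
  assumes "P \<in> carrier_mat r r" "permutation_mat r P"
  shows "mat_inv P = transpose_mat P"
  using assms permutation_mat_orthogonal[OF assms(2)] by (intro mat_inv_eqI) auto

lemma induced_norm_similar:
  fixes N :: "real vec \<Rightarrow> real"
  assumes P: "P \<in> carrier_mat r r" and Q: "Q \<in> carrier_mat r r" and M: "M \<in> carrier_mat r r"
    and PQ: "P * Q = 1\<^sub>m r" and QP: "Q * P = 1\<^sub>m r"
  shows "induced_norm (\<lambda>x. N (Q *\<^sub>v x)) r (P * M * Q) = induced_norm N r M"
proof -
  have QPy: "Q *\<^sub>v (P *\<^sub>v y) = y" if "y \<in> carrier_vec r" for y
    using assoc_mult_mat_vec[OF Q P that] QP that by simp
  have PQx: "P *\<^sub>v (Q *\<^sub>v x) = x" if "x \<in> carrier_vec r" for x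
    using assoc_mult_mat_vec[OF P Q that] PQ that by simp
  have conj: "Q *\<^sub>v ((P * M * Q) *\<^sub>v x) = M *\<^sub>v (Q *\<^sub>v x)" if "x \<in> carrier_vec r" for x
  proof -
    have "(P * M * Q) *\<^sub>v x = P *\<^sub>v (M *\<^sub>v (Q *\<^sub>v x))"
      using assoc_mult_mat_vec[OF mult_carrier_mat[OF P M] Q that]
        assoc_mult_mat_vec[OF P M mult_mat_vec_carrier[OF Q that]] by simp
    then show ?thesis using that Q M QPy[of "M *\<^sub>v (Q *\<^sub>v x)"] by simp
  qed
  have "{N (Q *\<^sub>v ((P * M * Q) *\<^sub>v x)) / N (Q *\<^sub>v x) | x. x \<in> carrier_vec r \<and> x \<noteq> 0\<^sub>v r}
      = {N (M *\<^sub>v y) / N y | y. y \<in> carrier_vec r \<and> y \<noteq> 0\<^sub>v r}"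
  proof (intro equalityI subsetI)
    fix z assume "z \<in> {N (Q *\<^sub>v ((P * M * Q) *\<^sub>v x)) / N (Q *\<^sub>v x) | x. x \<in> carrier_vec r \<and> x \<noteq> 0\<^sub>v r}"
    then obtain x where x: "x \<in> carrier_vec r" "x \<noteq> 0\<^sub>v r" and z: "z = N (M *\<^sub>v (Q *\<^sub>v x)) / N (Q *\<^sub>v x)"
      using conj by auto
    have "Q *\<^sub>v x \<noteq> 0\<^sub>v r" using PQx[OF x(1)] x(2) P by auto
    then show "z \<in> {N (M *\<^sub>v y) / N y | y. y \<in> carrier_vec r \<and> y \<noteq> 0\<^sub>v r}"
      using z Q x(1) by auto
  next
    fix z assume "z \<in> {N (M *\<^sub>v y) / N y | y. y \<in> carrier_vec r \<and> y \<noteq> 0\<^sub>v r}"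
    then obtain y where y: "y \<in> carrier_vec r" "y \<noteq> 0\<^sub>v r" and z: "z = N (M *\<^sub>v y) / N y" by auto
    have "P *\<^sub>v y \<noteq> 0\<^sub>v r" using QPy[OF y(1)] y(2) Q by auto
    moreover have "z = N (Q *\<^sub>v ((P * M * Q) *\<^sub>v (P *\<^sub>v y))) / N (Q *\<^sub>v (P *\<^sub>v y))"
      using z y P by (simp add: conj QPy)
    ultimately show "z \<in> {N (Q *\<^sub>v ((P * M * Q) *\<^sub>v x)) / N (Q *\<^sub>v x) | x. x \<in> carrier_vec r \<and> x \<noteq> 0\<^sub>v r}"
      using P y(1) by (intro CollectI exI[of _ "P *\<^sub>v y"]) auto
  qed
  then show ?thesis by (simp add: induced_norm_def)
qed

lemma matrix_measure_similar:
  fixes N :: "real vec \<Rightarrow> real"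
  assumes P: "P \<in> carrier_mat r r" and Q: "Q \<in> carrier_mat r r" and M: "M \<in> carrier_mat r r"
    and PQ: "P * Q = 1\<^sub>m r" and QP: "Q * P = 1\<^sub>m r"
  shows "matrix_measure (\<lambda>x. N (Q *\<^sub>v x)) r (P * M * Q) = matrix_measure N r M"
proof -
  have one_plus: "P * (1\<^sub>m r + e \<cdot>\<^sub>m M) * Q = 1\<^sub>m r + e \<cdot>\<^sub>m (P * M * Q)" for e
  proof -
    have PM: "P * M \<in> carrier_mat r r" using P M by simp
    have "P * (1\<^sub>m r + e \<cdot>\<^sub>m M) = P + e \<cdot>\<^sub>m (P * M)"
      using mult_add_distrib_mat[OF P one_carrier_mat smult_carrier_mat[OF M]] mult_smult_distrib[OF P M] P
      by simp
    then show ?thesis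
      using add_mult_distrib_mat[OF P smult_carrier_mat[OF PM] Q] mult_smult_assoc_mat[OF PM Q] PQ
      by simp
  qed
  then show ?thesis
    using induced_norm_similar[OF P Q _ PQ QP] M by (simp add: matrix_measure_def flip: one_plus)
qed

lemma (in block_norms) matrix_measure_permuted_diag_block_mat:
  assumes F: "\<And>i. i \<in> I \<Longrightarrow> F i \<in> carrier_mat (d i) (d i)"
    and P: "P \<in> carrier_mat r r" "permutation_mat r P"
  shows "matrix_measure (\<lambda>x. NB (mat_inv P *\<^sub>v x)) r (P * diag_block_mat (map F [lo..<lo + n]) * mat_inv P)
    = Max ((\<lambda>i. matrix_measure (N i) (d i) (F i)) ` I)"
proof -
  have "mat_inv P = transpose_mat P" by (rule mat_inv_permutation_mat[OF P])
  then have "P * mat_inv P = 1\<^sub>m r" "mat_inv P * P = 1\<^sub>m r" "mat_inv P \<in> carrier_mat r r"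
    using permutation_mat_orthogonal[OF P(2)] P(1) by auto
  then show ?thesis
    using matrix_measure_similar[OF P(1) _ diag_block_mat_carrier[OF F]] matrix_measure_diag_block_mat[OF F]
    by simp
qed

theorem matrix_measure_permuted_diag_kron_sum:
  fixes a b :: "nat \<Rightarrow> nat"
  assumes "block_norms N0 (\<lambda>i. lp_norm (p i)) (\<lambda>i. a i * b i) lo n"
    and p: "\<And>i. i \<in> {lo..<lo + n} \<Longrightarrow> 1 \<le> p i"
    and X: "\<And>i. i \<in> {lo..<lo + n} \<Longrightarrow> X i \<in> carrier_mat (a i) (a i)"
    and Y: "\<And>i. i \<in> {lo..<lo + n} \<Longrightarrow> Y i \<in> carrier_mat (b i) (b i)"
    and P: "P \<in> carrier_mat r r" "permutation_mat r P"
    and r: "r = block_offset (\<lambda>i. a i * b i) lo (lo + n)"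
  shows "matrix_measure (\<lambda>x. block_norm N0 (\<lambda>i. lp_norm (p i)) (\<lambda>i. a i * b i) lo n (mat_inv P *\<^sub>v x)) r
      (P * diag_block_mat (map (\<lambda>i. kron_sum (X i) (Y i)) [lo..<lo + n]) * mat_inv P)
    = Max ((\<lambda>i. matrix_measure (lp_norm (p i)) (a i) (X i) + matrix_measure (lp_norm (p i)) (b i) (Y i))
        ` {lo..<lo + n})"
proof -
  interpret block_norms N0 "\<lambda>i. lp_norm (p i)" "\<lambda>i. a i * b i" lo n by fact
  have "0 < a i" "0 < b i" if "i \<in> I" for i
    using vec_norm.dim_pos[OF inner[OF that]] by simp_all
  then have kron: "matrix_measure (lp_norm (p i)) (a i * b i) (kron_sum (X i) (Y i))
      = matrix_measure (lp_norm (p i)) (a i) (X i) + matrix_measure (lp_norm (p i)) (b i) (Y i)"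
    if "i \<in> I" for i
    using that by (intro matrix_measure_kron_sum p X Y)
  have "matrix_measure (\<lambda>x. NB (mat_inv P *\<^sub>v x)) r
      (P * diag_block_mat (map (\<lambda>i. kron_sum (X i) (Y i)) [lo..<lo + n]) * mat_inv P)
    = Max ((\<lambda>i. matrix_measure (lp_norm (p i)) (a i * b i) (kron_sum (X i) (Y i))) ` I)"
    unfolding r by (rule matrix_measure_permuted_diag_block_mat[OF kron_sum_carrier[OF X Y] P[unfolded r]])
  also have "\<dots> = Max ((\<lambda>i. matrix_measure (lp_norm (p i)) (a i) (X i)
      + matrix_measure (lp_norm (p i)) (b i) (Y i)) ` I)"
    using kron by (intro arg_cong[of _ _ Max] image_cong) auto
  finally show ?thesis .
qed

lemma Min_le_Max_image:
  fixes f g :: "'a \<Rightarrow> 'b::linorder"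
  assumes "finite S" "S \<noteq> {}" "\<And>i. i \<in> S \<Longrightarrow> f i \<le> g i"
  shows "Min (f ` S) \<le> Max (g ` S)"
proof -
  obtain i where "i \<in> S" using assms(2) by blast
  then show ?thesis using assms by (meson Max_ge Min_le finite_imageI image_eqI order_trans)
qed

theorem corollary1:
  fixes A B P :: "real mat" and n m k :: nat and p :: "nat \<Rightarrow> ereal"
    and N0 :: "real vec \<Rightarrow> real"
  assumes "n \<ge> 1" and "m \<ge> 1"
    and A: "A \<in> carrier_mat n n" and B: "B \<in> carrier_mat m m"
    and k: "1 \<le> k" "k \<le> n + m"
    and p: "\<forall>i\<in>{k - n..min m k}. 1 \<le> p i"
    and N0: "monotonic_norm (min m k - (k - n) + 1) N0"
    and P: "P \<in> carrier_mat ((n + m) choose k) ((n + m) choose k)"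
           "permutation_mat ((n + m) choose k) P"
    and PC: "add_compound k (four_block_mat A (0\<^sub>m n m) (0\<^sub>m m n) B) =
             P * diag_block_mat (map (\<lambda>i. kron_sum (add_compound (k - i) A) (add_compound i B))
                                     [k - n..<min m k + 1]) * mat_inv P"
  shows
    "matrix_measure
        (\<lambda>x. N0 (vec (min m k - (k - n) + 1)
                 (\<lambda>j. lp_norm (p (k - n + j))
                        (vec_block (\<lambda>i. (n choose (k - i)) * (m choose i)) (k - n) (k - n + j)
                           (mat_inv P *\<^sub>v x)))))
        ((n + m) choose k)
        (add_compound k (four_block_mat A (0\<^sub>m n m) (0\<^sub>m m n) B))
     = Max ((\<lambda>i. matrix_measure (lp_norm (p i)) (n choose (k - i)) (add_compound (k - i) A)
                 + matrix_measure (lp_norm (p i)) (m choose i) (add_compound i B)) ` {k - n..min m k})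
   \<and> Min ((\<lambda>i. - matrix_measure (lp_norm (p i)) (n choose (k - i)) (- add_compound (k - i) A)
                 - matrix_measure (lp_norm (p i)) (m choose i) (- add_compound i B)) ` {k - n..min m k})
     \<le> matrix_measure
        (\<lambda>x. N0 (vec (min m k - (k - n) + 1)
                 (\<lambda>j. lp_norm (p (k - n + j))
                        (vec_block (\<lambda>i. (n choose (k - i)) * (m choose i)) (k - n) (k - n + j)
                           (mat_inv P *\<^sub>v x)))))
        ((n + m) choose k)
        (add_compound k (four_block_mat A (0\<^sub>m n m) (0\<^sub>m m n) B))"
proof -
  define s where "s = min m k - (k - n) + 1"
  let ?I = "{k - n..min m k}"
  let ?X = "\<lambda>i. add_compound (k - i) A" and ?Y = "\<lambda>i. add_compound i B"
  have I: "{k - n..<k - n + s} = ?I" and upt: "[k - n..<min m k + 1] = [k - n..<k - n + s]"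
    using k by (auto simp: s_def)
  have inner: "vec_norm ((n choose (k - i)) * (m choose i)) (lp_norm (p i))" if "i \<in> ?I" for i
    using p that by (intro vec_norm_lp_norm) (auto simp: zero_less_binomial_iff)
  have blocks: "block_norms N0 (\<lambda>i. lp_norm (p i)) (\<lambda>i. (n choose (k - i)) * (m choose i)) (k - n) s"
    by (rule block_norms.intro) (use N0 inner in \<open>simp_all add: s_def flip: I\<close>)
  have "matrix_measure (\<lambda>x. block_norm N0 (\<lambda>i. lp_norm (p i)) (\<lambda>i. (n choose (k - i)) * (m choose i))
        (k - n) s (mat_inv P *\<^sub>v x)) ((n + m) choose k) (add_compound k (four_block_mat A (0\<^sub>m n m) (0\<^sub>m m n) B))
    = Max ((\<lambda>i. matrix_measure (lp_norm (p i)) (n choose (k - i)) (?X i)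
        + matrix_measure (lp_norm (p i)) (m choose i) (?Y i)) ` ?I)"
    unfolding PC upt I[symmetric]
    by (rule matrix_measure_permuted_diag_kron_sum[OF blocks])
      (use p P add_compound_carrier[OF A] add_compound_carrier[OF B] vandermonde_restricted[OF k(2)]
        in \<open>auto simp: I block_offset_def\<close>)
  moreover have "Min ((\<lambda>i. - matrix_measure (lp_norm (p i)) (n choose (k - i)) (- ?X i)
        + - matrix_measure (lp_norm (p i)) (m choose i) (- ?Y i)) ` ?I)
    \<le> Max ((\<lambda>i. matrix_measure (lp_norm (p i)) (n choose (k - i)) (?X i)
        + matrix_measure (lp_norm (p i)) (m choose i) (?Y i)) ` ?I)"
    using k p add_compound_carrier[OF A] add_compound_carrier[OF B]
    by (intro Min_le_Max_image add_mono neg_lp_matrix_measure_uminus_le)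
      (auto simp: zero_less_binomial_iff)
  ultimately show ?thesis by (simp add: block_norm_def s_def)
qed

end
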